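(* Assume the setting of the context (random weights). Fix $T_1>0$ and suppose Assumptions (A1R), (A2R) and (A3R) hold. Then for every $\varepsilon>0$, \[\lim_{n\rightarrow\infty}\mathbb{P}_{\mu}\left(\sup_{x\in F}\sup_{t\geq T_1}\left|\beta(n)q^n_{\lfloor\gamma(n)t\rfloor}(g_n(x))-q_t(x)\right|>\varepsilon\right)=0.\]
   Context: Let $(E,d_E)$ be a metric space and $F\subseteq E$ such that $F\cap\overline{B}_E(x,r)$ is compact for all $x\in E$, $r>0$ ($\overline{B}_E$, $B_E$ closed and open balls in $E$). Let $d_F:=d_E|_{F\times F}$, $B_F(x,r)$ the open ball in $(F,d_F)$, $\rho\in F$, $\nu$ a Radon measure of full support on $(F,d_F)$ (extended to $E$ by $\nu(A):=\nu(A\cap F)$), and $(q_t(x))_{x\in F,t>0}$ jointly continuous in $(t,x)$ with $q_t\ge0$, $\int_Fq_t\,d\nu=1$ for each $t>0$. For a locally finite connected graph $G$ with at least two vertices and distinguished vertex $\rho(G)$: $d_G$ is the shortest-path metric, $B_G(x,r)$ the open $d_G$-ball; $\mu^G$ a symmetric weight with $\mu^G_{xy}>0$ iff $\{x,y\}$ is an edge; $\mu^G_x:=\sum_y\mu^G_{xy}$; $\nu^G(A):=\sum_{x\in A}\mu^G_x$; $X^G$ the discrete time simple random walk with $P_G(x,y)=\mu^G_{xy}/\mu^G_x$, law $\mathbf{P}^G_x$; $p^G_m(x,y):=\mathbf{P}^G_x(X^G_m=y)/\nu^G(\{y\})$, $q^G_m(x,y):=\frac12(p^G_m+p^G_{m+1})(x,y)$,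 $q^G_m(x):=q^G_m(\rho(G),x)$. $(G^n)_{n\ge1}$ are such graphs with $V(G^n)\subseteq E$, $\rho(G^n)=\rho$; write $\nu^n,X^n,q^n$ for $\nu^{G^n},X^{G^n},q^{G^n}$. The weights of all the $G^n$ are random, given by a random element of $(0,\infty)^{\cup_nE(G^n)}$ with law $\mathbb{P}_\mu$. $(\alpha(n)),(\beta(n)),(\gamma(n))$ are non-negative deterministic sequences diverging to $\infty$. For $x\in E$, $g_n(x)$ is a point of $V(G^n)$ minimising $d_E(x,\cdot)$. Assumption (A1R): (a) there is $c_1>0$ with $d_{G^n}(x,y)\ge c_1\alpha(n)d_E(x,y)$ for all $x,y\in V(G^n)$, $n\ge1$, and a non-negative $\tilde\alpha(n)=o(\alpha(n))$ such that for each $r>0$ there are $c_2<\infty$, $n_0$ with $d_{G^n}(x,y)\le c_2\alpha(n)d_E(x,y)+\tilde\alpha(n)$ for all $x,y\in V(G^n)\cap B_E(\rho,r)$, $n\ge n_0$; (b) for each $r>0$, $\lim_n\sup_{x\in B_F(\rho,r)}d_E(x,V(G^n))=0$; (c) for every $x\in F$, $r,\varepsilon>0$, $\lim_n\mathbb{P}_\mu(|\beta(n)^{-1}\nu^n(B_E(x,r))-\nu(B_E(x,r))|>\varepsilon)=0$; (d) for every compact interval $I\subset(0,\infty)$, $x\in F$, $r,\varepsilon>0$, $\lim_n\mathbb{P}_\mu(\sup_{t\in I}|\mathbf{P}^{G^n}_\rho(X^n_{\lfloor\gamma(n)t\rfloor}\in B_E(x,r))-\int_{B_E(x,r)}q_t(y)\nu(dy)|>\varepsilon)=0$.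 Assumption (A2R): for every compact interval $I\subset(0,\infty)$ and $r,\varepsilon>0$, \[\lim_{\delta\to0}\limsup_{n\to\infty}\mathbb{P}_\mu\Big(\sup_{\substack{x,y\in B_{G^n}(\rho,\alpha(n)r):\\ d_{G^n}(x,y)\le\alpha(n)\delta}}\sup_{t\in I}\beta(n)\big|q^n_{\lfloor\gamma(n)t\rfloor}(x)-q^n_{\lfloor\gamma(n)t\rfloor}(y)\big|>\varepsilon\Big)=0.\] Assumption (A3R): $(F,d_F)$ has the midpoint property (for all $x,y\in F$ there is $z\in F$ with $d_F(x,z)=\frac12d_F(x,y)=d_F(z,y)$); (a) $\lim_{t\to\infty}\sup_{x\in F}q_t(x)=0$ and $\lim_{r\to\infty}\sup_{x\in F\setminus B_F(\rho,r)}\sup_{t\in I}q_t(x)=0$ for every compact interval $I\subset(0,\infty)$; (b) for every $\varepsilon>0$, $\lim_{t\to\infty}\limsup_n\mathbb{P}_\mu(\sup_{x\in V(G^n)}\beta(n)q^n_{\lfloor\gamma(n)t\rfloor}(x)>\varepsilon)=0$, and for every compact interval $I\subset(0,\infty)$ and $\varepsilon>0$, $\lim_{r\to\infty}\limsup_n\mathbb{P}_\mu(\sup_{x\in V(G^n)\setminus B_{G^n}(\rho,\alpha(n)r)}\sup_{t\in I}\beta(n)q^n_{\lfloor\gamma(n)t\rfloor}(x)>\varepsilon)=0$. *)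

theory Defs
  imports "HOL-Probability.Probability" "HOL-Library.Landau_Symbols"
begin

text \<open>Edge weights: a symmetric function on pairs of points of E
  (weight of the edge {x,y}, shared by all graphs containing that edge).\<close>
type_synonym 'e wts = "'e \<Rightarrow> 'e \<Rightarrow> real"

definition gdist :: "('e \<Rightarrow> 'e \<Rightarrow> bool) \<Rightarrow> 'e \<Rightarrow> 'e \<Rightarrow> nat" where
  "gdist A x y = (LEAST k. (A ^^ k) x y)"

definition gball :: "'e set \<Rightarrow> ('e \<Rightarrow> 'e \<Rightarrow> bool) \<Rightarrow> 'e \<Rightarrow> real \<Rightarrow> 'e set" where
  "gball V A x r = {y \<in> V. real (gdist A x y) < r}"

definition wdeg :: "'e wts \<Rightarrow> ('e \<Rightarrow> 'e \<Rightarrow> bool) \<Rightarrow> 'e \<Rightarrow> real" where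
  "wdeg w A x = (\<Sum>y\<in>{y. A x y}. w x y)"

definition gmeas :: "'e wts \<Rightarrow> ('e \<Rightarrow> 'e \<Rightarrow> bool) \<Rightarrow> 'e set \<Rightarrow> 'e set \<Rightarrow> real" where
  "gmeas w A V S = (\<Sum>x\<in>S \<inter> V. wdeg w A x)"

text \<open>hitp w A m x S = P_x(X_m in S) for the random walk with transition
  probabilities P(x,z) = mu_xz / mu_x.\<close>
primrec hitp :: "'e wts \<Rightarrow> ('e \<Rightarrow> 'e \<Rightarrow> bool) \<Rightarrow> nat \<Rightarrow> 'e \<Rightarrow> 'e set \<Rightarrow> real" where
  "hitp w A 0 x S = (if x \<in> S then 1 else 0)"
| "hitp w A (Suc m) x S = (\<Sum>z\<in>{z. A x z}. (w x z / wdeg w A x) * hitp w A m z S)"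

definition hk :: "'e wts \<Rightarrow> ('e \<Rightarrow> 'e \<Rightarrow> bool) \<Rightarrow> nat \<Rightarrow> 'e \<Rightarrow> 'e \<Rightarrow> real" where
  "hk w A m x y = hitp w A m x {y} / wdeg w A y"

definition qk :: "'e wts \<Rightarrow> ('e \<Rightarrow> 'e \<Rightarrow> bool) \<Rightarrow> nat \<Rightarrow> 'e \<Rightarrow> 'e \<Rightarrow> real" where
  "qk w A m x y = (hk w A m x y + hk w A (Suc m) x y) / 2"

text \<open>Outer probability (events are not assumed measurable).\<close>
definition outer_prob :: "'a measure \<Rightarrow> 'a set \<Rightarrow> real" where
  "outer_prob M A = (INF B \<in> {B \<in> sets M. A \<inter> space M \<subseteq> B}. measure M B)"

definition midpoint_property :: "'e::metric_space set \<Rightarrow> bool" where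
  "midpoint_property F \<longleftrightarrow>
     (\<forall>x\<in>F. \<forall>y\<in>F. \<exists>z\<in>F. dist x z = dist x y / 2 \<and> dist z y = dist x y / 2)"

end

theory Submission
  imports Defs
begin

text \<open>Split the deviation event according to time and space. For large times both
  \<open>q\<^sub>t\<close> and the rescaled graph kernels are uniformly small by (A3R), using that the maximum of
  \<open>q\<^sup>n\<^sub>m\<close> is non-increasing in \<open>m\<close>. Far from \<open>\<rho>\<close> the same holds by (A3R) together with
  (A1R)(a),(b): the vertex nearest to a far point is far from \<open>\<rho>\<close> in the graph metric, which
  needs the midpoint property of \<open>F\<close>. On a compact piece of space--time, cover \<open>F\<close> by finitely
  many small balls: by the equicontinuity (A2R) the kernel at the nearest vertex is close to
  its average over a ball, and this average, a hitting probability divided by the graph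
  measure of the ball, converges by (A1R)(c),(d) to the average of \<open>q\<^sub>t\<close>, which is close to
  \<open>q\<^sub>t(x)\<close> by continuity.\<close>

section \<open>Outer probability\<close>

lemma outer_prob_nonneg: "0 \<le> outer_prob M A"
  unfolding outer_prob_def by (rule cINF_greatest) (auto intro: exI[of _ "space M"])

lemma bdd_below_outer_prob_candidates:
  "bdd_below ((\<lambda>B. measure M B) ` {B \<in> sets M. A \<inter> space M \<subseteq> B})"
  by (rule bdd_belowI[of _ 0]) auto

lemma outer_prob_le_measure:
  "C \<in> sets M \<Longrightarrow> A \<inter> space M \<subseteq> C \<Longrightarrow> outer_prob M A \<le> measure M C"
  unfolding outer_prob_def by (rule cINF_lower[OF bdd_below_outer_prob_candidates]) auto

lemma outer_prob_approx:
  assumes "e > 0"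
  obtains C where "C \<in> sets M" "A \<inter> space M \<subseteq> C" "measure M C < outer_prob M A + e"
proof -
  have "{B \<in> sets M. A \<inter> space M \<subseteq> B} \<noteq> {}" by auto
  then have "\<exists>C\<in>{C \<in> sets M. A \<inter> space M \<subseteq> C}. measure M C < outer_prob M A + e"
    unfolding outer_prob_def using assms
    by (subst cINF_less_iff[OF _ bdd_below_outer_prob_candidates, symmetric]) auto
  then show thesis using that by blast
qed

lemma outer_prob_mono:
  assumes "A \<inter> space M \<subseteq> B"
  shows "outer_prob M A \<le> outer_prob M B"
proof (rule field_le_epsilon)
  fix e :: real assume "e > 0"
  then obtain C where C: "C \<in> sets M" "B \<inter> space M \<subseteq> C" "measure M C < outer_prob M B + e"
    by (rule outer_prob_approx)
  have "outer_prob M A \<le> measure M C"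
    using C assms by (intro outer_prob_le_measure) auto
  with C show "outer_prob M A \<le> outer_prob M B + e" by simp
qed

lemma outer_prob_Un: "outer_prob M (A \<union> B) \<le> outer_prob M A + outer_prob M B"
proof (rule field_le_epsilon)
  fix e :: real assume "e > 0"
  then have "e/2 > 0" by simp
  obtain C1 where C1: "C1 \<in> sets M" "A \<inter> space M \<subseteq> C1" "measure M C1 < outer_prob M A + e/2"
    using outer_prob_approx[OF \<open>e/2 > 0\<close>] by blast
  obtain C2 where C2: "C2 \<in> sets M" "B \<inter> space M \<subseteq> C2" "measure M C2 < outer_prob M B + e/2"
    using outer_prob_approx[OF \<open>e/2 > 0\<close>] by blast
  have "outer_prob M (A \<union> B) \<le> measure M (C1 \<union> C2)"
    using C1 C2 by (intro outer_prob_le_measure) auto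
  also have "\<dots> \<le> measure M C1 + measure M C2"
    using C1 C2 by (intro measure_Un_le) auto
  finally show "outer_prob M (A \<union> B) \<le> outer_prob M A + outer_prob M B + e"
    using C1 C2 by simp
qed

lemma outer_prob_UN:
  "finite I \<Longrightarrow> outer_prob M (\<Union>i\<in>I. A i) \<le> (\<Sum>i\<in>I. outer_prob M (A i))"
proof (induction I rule: finite_induct)
  case empty
  show ?case using outer_prob_le_measure[of "{}" M "{}"] by simp
next
  case (insert i I)
  have "outer_prob M (\<Union>i\<in>insert i I. A i) \<le> outer_prob M (A i) + outer_prob M (\<Union>i\<in>I. A i)"
    using outer_prob_Un[of M "A i" "\<Union>i\<in>I. A i"] by simp
  with insert show ?case by simp
qed

lemma outer_prob_cover_le:
  assumes "A \<inter> space M \<subseteq> B \<union> (\<Union>y\<in>Y. C y \<union> D y)" "finite Y"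
  shows "outer_prob M A \<le> outer_prob M B + (\<Sum>y\<in>Y. outer_prob M (C y) + outer_prob M (D y))"
proof -
  have "outer_prob M A \<le> outer_prob M (B \<union> (\<Union>y\<in>Y. C y \<union> D y))"
    using assms(1) by (rule outer_prob_mono)
  also have "\<dots> \<le> outer_prob M B + outer_prob M (\<Union>y\<in>Y. C y \<union> D y)"
    by (rule outer_prob_Un)
  also have "\<dots> \<le> outer_prob M B + (\<Sum>y\<in>Y. outer_prob M (C y \<union> D y))"
    using outer_prob_UN[OF assms(2)] by (rule add_left_mono)
  also have "\<dots> \<le> outer_prob M B + (\<Sum>y\<in>Y. outer_prob M (C y) + outer_prob M (D y))"
    by (intro add_left_mono sum_mono outer_prob_Un)
  finally show ?thesis .
qed

section \<open>Graphs, random walks and heat kernels\<close>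

lemma finite_relpowp_successors:
  fixes R :: "'a \<Rightarrow> 'a \<Rightarrow> bool"
  assumes "\<And>x. finite {y. R x y}"
  shows "finite {y. (R ^^ k) x y}"
proof (induction k)
  case 0
  have "{y. (R ^^ 0) x y} = {x}" by auto
  then show ?case by simp
next
  case (Suc k)
  have "{y. (R ^^ Suc k) x y} = (\<Union>z\<in>{z. (R ^^ k) x z}. {y. R z y})"
    by (auto simp: relpowp_Suc_right)
  then show ?case using Suc assms by simp
qed

lemma relpowp_gdist: "(R ^^ k) x y \<Longrightarrow> (R ^^ gdist R x y) x y"
  unfolding gdist_def by (rule LeastI)

lemma finite_gdist_le:
  assumes "\<And>x. finite {y. R x y}" and "\<forall>y\<in>V. \<exists>k. (R ^^ k) x y"
  shows "finite {y\<in>V. real (gdist R x y) \<le> K}"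
proof (rule finite_subset)
  show "{y\<in>V. real (gdist R x y) \<le> K} \<subseteq> (\<Union>k\<le>nat \<lceil>K\<rceil>. {y. (R ^^ k) x y})"
  proof
    fix y assume y: "y \<in> {y\<in>V. real (gdist R x y) \<le> K}"
    then obtain k where "(R ^^ k) x y" using assms(2) by blast
    then have "(R ^^ gdist R x y) x y" by (rule relpowp_gdist)
    moreover have "gdist R x y \<le> nat \<lceil>K\<rceil>"
    proof -
      have "int (gdist R x y) \<le> \<lceil>K\<rceil>" using y by (simp add: le_ceiling_iff)
      then show ?thesis by linarith
    qed
    ultimately show "y \<in> (\<Union>k\<le>nat \<lceil>K\<rceil>. {y. (R ^^ k) x y})" by blast
  qed
  show "finite (\<Union>k\<le>nat \<lceil>K\<rceil>. {y. (R ^^ k) x y})"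
    using finite_relpowp_successors[OF assms(1)] by auto
qed

lemma connected_has_neighbour:
  assumes "x \<in> V" "y \<in> V" "y \<noteq> x" "\<forall>a\<in>V. \<forall>b\<in>V. \<exists>k. (R ^^ k) a b"
  shows "\<exists>z. R x z"
proof -
  obtain k where k: "(R ^^ k) x y" using assms by blast
  show ?thesis
  proof (cases k)
    case 0
    with k \<open>y \<noteq> x\<close> show ?thesis by simp
  next
    case (Suc j)
    with k show ?thesis by (metis relpowp_Suc_D2)
  qed
qed

lemma wdeg_nonneg: "(\<And>z. R x z \<Longrightarrow> 0 < w x z) \<Longrightarrow> 0 \<le> wdeg w R x"
  unfolding wdeg_def by (rule sum_nonneg) (auto intro: less_imp_le)

lemma wdeg_pos:
  "finite {z. R x z} \<Longrightarrow> R x y \<Longrightarrow> (\<And>z. R x z \<Longrightarrow> 0 < w x z) \<Longrightarrow> 0 < wdeg w R x"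
  unfolding wdeg_def by (rule sum_pos) auto

lemma hitp_nonneg:
  assumes "\<And>x z. R x z \<Longrightarrow> 0 < w x z"
  shows "0 \<le> hitp w R m x S"
proof (induction m arbitrary: x)
  case (Suc m)
  have "0 \<le> wdeg w R x" using assms by (rule wdeg_nonneg)
  with Suc assms show ?case unfolding hitp.simps
    by (intro sum_nonneg mult_nonneg_nonneg divide_nonneg_nonneg) (auto intro: less_imp_le)
qed simp

lemma hitp_eq_sum_singletons:
  assumes "\<And>x y. R x y \<Longrightarrow> y \<in> V" "x \<in> V" "finite (S \<inter> V)"
  shows "hitp w R m x S = (\<Sum>v\<in>S \<inter> V. hitp w R m x {v})"
  using assms(2)
proof (induction m arbitrary: x)
  case 0
  have "(\<Sum>v\<in>S \<inter> V. hitp w R 0 x {v}) = (\<Sum>v\<in>S \<inter> V. if x = v then 1 else 0)"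
    by (intro sum.cong) auto
  with 0 assms(3) show ?case by simp
next
  case (Suc m)
  have "hitp w R (Suc m) x S
      = (\<Sum>z\<in>{z. R x z}. \<Sum>v\<in>S \<inter> V. (w x z / wdeg w R x) * hitp w R m z {v})"
    using Suc assms(1) by (auto simp: sum_distrib_left intro!: sum.cong)
  also have "\<dots> = (\<Sum>v\<in>S \<inter> V. hitp w R (Suc m) x {v})"
    by (subst sum.swap) simp
  finally show ?case .
qed

text \<open>The recursion defining \<open>hitp\<close> splits off the first step of the walk; symmetry of the
  relation allows splitting off the last one instead.\<close>
lemma hitp_Suc_last_step:
  assumes sym: "\<And>x y. R x y \<Longrightarrow> R y x" and fin: "\<And>x. finite {y. R x y}"
  shows "hitp w R (Suc m) y {x} = (\<Sum>z\<in>{z. R x z}. hitp w R m y {z} * (w z x / wdeg w R z))"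
proof (induction m arbitrary: y)
  case 0
  have "hitp w R (Suc 0) y {x} = (\<Sum>z\<in>{z. R y z}. if z = x then w y z / wdeg w R y else 0)"
    by (auto intro: sum.cong)
  also have "\<dots> = (if R y x then w y x / wdeg w R y else 0)"
    using fin by (simp add: sum.delta)
  also have "\<dots> = (\<Sum>z\<in>{z. R x z}. if y = z then w z x / wdeg w R z else 0)"
    using sym fin by (auto simp add: sum.delta')
  finally show ?case by (auto intro: sum.cong)
next
  case (Suc m)
  have "hitp w R (Suc (Suc m)) y {x} = (\<Sum>u\<in>{u. R y u}. \<Sum>z\<in>{z. R x z}.
          (w y u / wdeg w R y) * hitp w R m u {z} * (w z x / wdeg w R z))"
    using Suc by (simp only: hitp.simps sum_distrib_left mult.assoc)
  also have "\<dots> = (\<Sum>z\<in>{z. R x z}.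
      (\<Sum>u\<in>{u. R y u}. (w y u / wdeg w R y) * hitp w R m u {z}) * (w z x / wdeg w R z))"
    by (subst sum.swap) (simp only: sum_distrib_right)
  finally show ?case by (simp only: hitp.simps)
qed

lemma hk_Suc:
  assumes "\<And>x y. R x y \<Longrightarrow> R y x" "\<And>x. finite {y. R x y}"
    and wsym: "\<And>x z. R x z \<Longrightarrow> w x z = w z x"
  shows "hk w R (Suc m) y x = (\<Sum>z\<in>{z. R x z}. (w x z / wdeg w R x) * hk w R m y z)"
proof -
  have "hk w R (Suc m) y x
      = (\<Sum>z\<in>{z. R x z}. hitp w R m y {z} * (w z x / wdeg w R z) / wdeg w R x)"
    using hitp_Suc_last_step[where R=R, OF assms(1,2), where w=w and m=m and y=y and x=x]
    unfolding hk_def by (simp add: sum_divide_distrib)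
  also have "\<dots> = (\<Sum>z\<in>{z. R x z}. (w x z / wdeg w R x) * hk w R m y z)"
    unfolding hk_def using wsym by (intro sum.cong refl) (auto simp: ac_simps)
  finally show ?thesis .
qed

lemma qk_Suc:
  assumes "\<And>x y. R x y \<Longrightarrow> R y x" "\<And>x. finite {y. R x y}"
    and "\<And>x z. R x z \<Longrightarrow> w x z = w z x"
  shows "qk w R (Suc m) y x = (\<Sum>z\<in>{z. R x z}. (w x z / wdeg w R x) * qk w R m y z)"
proof -
  have "qk w R (Suc m) y x = ((\<Sum>z\<in>{z. R x z}. (w x z / wdeg w R x) * hk w R m y z) +
     (\<Sum>z\<in>{z. R x z}. (w x z / wdeg w R x) * hk w R (Suc m) y z)) / 2"
    unfolding qk_def using hk_Suc[where R=R, OF assms, where m=m]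
      hk_Suc[where R=R, OF assms, where m="Suc m"] by simp
  then show ?thesis
    unfolding qk_def by (simp add: sum.distrib[symmetric] sum_divide_distrib distrib_left)
qed

lemma qk_nonneg:
  assumes "\<And>x z. R x z \<Longrightarrow> 0 < w x z"
  shows "0 \<le> qk w R m y x"
proof -
  have "0 \<le> hk w R k y x" for k
    unfolding hk_def using assms by (intro divide_nonneg_nonneg hitp_nonneg wdeg_nonneg)
  then show ?thesis unfolding qk_def by simp
qed

text \<open>Maximum principle: by \<open>qk_Suc\<close>, the kernel at time \<open>m + 1\<close> is an average of the kernel
  at time \<open>m\<close> over neighbours.\<close>
lemma qk_le_later:
  assumes edges: "\<And>x y. R x y \<Longrightarrow> y \<in> V"
    and sym: "\<And>x y. R x y \<Longrightarrow> R y x" and fin: "\<And>x. finite {y. R x y}"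
    and wpos: "\<And>x z. R x z \<Longrightarrow> 0 < w x z" and wsym: "\<And>x z. R x z \<Longrightarrow> w x z = w z x"
    and nbr: "\<And>x. x \<in> V \<Longrightarrow> \<exists>z. R x z"
    and bound: "\<And>v. v \<in> V \<Longrightarrow> qk w R m y v \<le> c"
    and "m \<le> m'" "x \<in> V"
  shows "qk w R m' y x \<le> c"
proof -
  have "qk w R (m + j) y x \<le> c" if "x \<in> V" for j x
    using that
  proof (induction j arbitrary: x)
    case 0
    then show ?case using bound by simp
  next
    case (Suc j)
    obtain z0 where "R x z0" using nbr Suc.prems by blast
    then have wd: "0 < wdeg w R x" using fin wpos by (intro wdeg_pos)
    have "qk w R (m + Suc j) y x = (\<Sum>z\<in>{z. R x z}. (w x z / wdeg w R x) * qk w R (m + j) y z)"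
      using qk_Suc[where R=R, OF sym fin wsym, where m="m + j"] by simp
    also have "\<dots> \<le> (\<Sum>z\<in>{z. R x z}. (w x z / wdeg w R x) * c)"
      using Suc.IH edges wpos wd by (intro sum_mono mult_left_mono) (auto intro: less_imp_le)
    also have "\<dots> = c"
      using wd unfolding wdeg_def by (simp add: sum_distrib_right[symmetric] sum_divide_distrib[symmetric])
    finally show ?case .
  qed
  from this[of x "m' - m"] assms(8,9) show ?thesis by simp
qed

lemma sum_qk_wdeg:
  assumes "\<And>x y. R x y \<Longrightarrow> y \<in> V" "x \<in> V" "finite (B \<inter> V)"
    and "\<And>v. v \<in> B \<inter> V \<Longrightarrow> 0 < wdeg w R v"
  shows "(\<Sum>v\<in>B \<inter> V. qk w R m x v * wdeg w R v)
       = (hitp w R m x B + hitp w R (Suc m) x B) / 2"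
proof -
  have "(\<Sum>v\<in>B \<inter> V. qk w R m x v * wdeg w R v)
      = (\<Sum>v\<in>B \<inter> V. (hitp w R m x {v} + hitp w R (Suc m) x {v}) / 2)"
  proof (rule sum.cong)
    fix v assume "v \<in> B \<inter> V"
    then have "wdeg w R v \<noteq> 0" using assms(4) by force
    then show "qk w R m x v * wdeg w R v = (hitp w R m x {v} + hitp w R (Suc m) x {v}) / 2"
      unfolding qk_def hk_def by (simp add: field_simps)
  qed simp
  also have "\<dots> = (hitp w R m x B + hitp w R (Suc m) x B) / 2"
    using hitp_eq_sum_singletons[where R=R, OF assms(1-3), where m=m and w=w]
      hitp_eq_sum_singletons[where R=R, OF assms(1-3), where m="Suc m" and w=w]
    by (simp only: sum_divide_distrib[symmetric] sum.distrib)
  finally show ?thesis .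
qed

lemma closed_if_compact_cballs:
  fixes F :: "'a::metric_space set"
  assumes "\<And>x r. r > 0 \<Longrightarrow> compact (F \<inter> cball x r)"
  shows "closed F"
  unfolding closed_sequential_limits
proof (intro allI impI)
  fix s l assume s: "(\<forall>n. s n \<in> F) \<and> s \<longlonglongrightarrow> l"
  then obtain N where N: "\<forall>n\<ge>N. dist (s n) l < 1"
    using tendstoD[of s l sequentially 1] by (auto simp: eventually_sequentially)
  have "closed (F \<inter> cball l 1)" using assms by (intro compact_imp_closed) auto
  moreover have "\<forall>n. s (n + N) \<in> F \<inter> cball l 1" using s N by (auto simp: dist_commute less_imp_le)
  moreover have "(\<lambda>n. s (n + N)) \<longlonglongrightarrow> l" using s by (intro LIMSEQ_ignore_initial_segment) auto
  ultimately have "l \<in> F \<inter> cball l 1" by (metis closed_sequentially)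
  then show "l \<in> F" by simp
qed

text \<open>Repeatedly replace \<open>x\<close> by the midpoint between \<open>\<rho>\<close> and \<open>x\<close>; the last point before
  the distance drops below \<open>2 s\<close> still lies metrically between \<open>\<rho>\<close> and \<open>x\<close>.\<close>
lemma midpoint_property_annulus:
  assumes mid: "midpoint_property F" and "\<rho> \<in> F" "x \<in> F" "0 < s" "s \<le> dist \<rho> x"
  obtains z where "z \<in> F" "s \<le> dist \<rho> z" "dist \<rho> z < 2 * s" "dist z x + dist \<rho> z \<le> dist \<rho> x"
proof -
  have "\<exists>z\<in>F. s \<le> dist \<rho> z \<and> dist \<rho> z < 2 * s \<and> dist z x + dist \<rho> z \<le> dist \<rho> x"
    if "x \<in> F" "s \<le> dist \<rho> x" "dist \<rho> x < 2^k * s" for k x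
    using that
  proof (induction k arbitrary: x)
    case 0
    then show ?case by auto
  next
    case (Suc k)
    show ?case
    proof (cases "dist \<rho> x < 2 * s")
      case True
      with Suc.prems show ?thesis by auto
    next
      case False
      obtain m where m: "m \<in> F" "dist \<rho> m = dist \<rho> x / 2" "dist m x = dist \<rho> x / 2"
        using mid \<open>\<rho> \<in> F\<close> Suc.prems(1) unfolding midpoint_property_def by blast
      then obtain z where z: "z \<in> F" "s \<le> dist \<rho> z" "dist \<rho> z < 2 * s"
          "dist z m + dist \<rho> z \<le> dist \<rho> m"
        using Suc.IH[of m] Suc.prems False by auto
      have "dist z x \<le> dist z m + dist m x" by (rule dist_triangle)
      with z m show ?thesis by auto
    qed
  qed
  moreover obtain k where "dist \<rho> x / s < 2 ^ k" using real_arch_pow[of 2 "dist \<rho> x / s"] by auto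
  then have "dist \<rho> x < 2^k * s" using \<open>0 < s\<close> by (simp add: divide_less_eq)
  ultimately show thesis using that assms(3,5) by blast
qed

lemma uniformly_continuous_on_Icc_Times:
  fixes f :: "real \<Rightarrow> 'a::metric_space \<Rightarrow> real"
  assumes cont: "continuous_on ({0<..} \<times> F) (\<lambda>(t, x). f t x)"
    and "compact K" "K \<subseteq> F" "0 < a" "0 < e"
  obtains d where "0 < d" "\<And>s t x y. s \<in> {a..b} \<Longrightarrow> t \<in> {a..b} \<Longrightarrow> x \<in> K \<Longrightarrow> y \<in> K \<Longrightarrow>
    \<bar>s - t\<bar> < d \<Longrightarrow> dist x y < d \<Longrightarrow> \<bar>f s x - f t y\<bar> < e"
proof -
  have "continuous_on ({a..b} \<times> K) (\<lambda>(t, x). f t x)"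
    by (rule continuous_on_subset[OF cont]) (use assms in auto)
  then have "uniformly_continuous_on ({a..b} \<times> K) (\<lambda>(t, x). f t x)"
    by (intro compact_uniformly_continuous compact_Times compact_Icc \<open>compact K\<close>)
  then obtain d where d: "d > 0" "\<forall>p\<in>{a..b} \<times> K. \<forall>p'\<in>{a..b} \<times> K. dist p' p < d \<longrightarrow>
      dist ((\<lambda>(t, x). f t x) p') ((\<lambda>(t, x). f t x) p) < e"
    unfolding uniformly_continuous_on_def using \<open>0 < e\<close> by blast
  show thesis
  proof (rule that[of "d/2"])
    fix s t x y assume "s \<in> {a..b}" "t \<in> {a..b}" "x \<in> K" "y \<in> K" "\<bar>s - t\<bar> < d/2" "dist x y < d/2"
    moreover from this have "dist (s, x) (t, y) < d" unfolding dist_Pair_Pair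
      by (intro sqrt_sum_squares_half_less) (auto simp: dist_real_def)
    ultimately show "\<bar>f s x - f t y\<bar> < e" using d(2)[rule_format, of "(t,y)" "(s,x)"]
      by (auto simp: dist_real_def)
  qed (use d in auto)
qed

lemma bounded_above_on_Icc_Times:
  fixes f :: "real \<Rightarrow> 'a::metric_space \<Rightarrow> real"
  assumes cont: "continuous_on ({0<..} \<times> F) (\<lambda>(t, x). f t x)"
    and "compact K" "K \<subseteq> F" "0 < a"
  obtains B where "0 \<le> B" "\<And>t x. t \<in> {a..b} \<Longrightarrow> x \<in> K \<Longrightarrow> f t x \<le> B"
proof -
  have "continuous_on ({a..b} \<times> K) (\<lambda>(t, x). f t x)"
    by (rule continuous_on_subset[OF cont]) (use assms in auto)
  then have "compact ((\<lambda>(t, x). f t x) ` ({a..b} \<times> K))"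
    by (intro compact_continuous_image compact_Times compact_Icc \<open>compact K\<close>)
  then have "bounded ((\<lambda>(t, x). f t x) ` ({a..b} \<times> K))" by (rule compact_imp_bounded)
  then obtain B where B: "\<forall>z\<in>(\<lambda>(t, x). f t x) ` ({a..b} \<times> K). norm z \<le> B"
    unfolding bounded_iff by blast
  show thesis
  proof (rule that[of "max B 0"])
    fix t x assume "t \<in> {a..b}" "x \<in> K"
    then have "norm (f t x) \<le> B" using B by force
    then show "f t x \<le> max B 0" by simp
  qed simp
qed

lemma set_nn_integral_bounds:
  fixes f :: "'a \<Rightarrow> real"
  assumes S: "S \<in> sets \<nu>" and fin: "emeasure \<nu> S < \<infinity>"
    and U: "\<And>y. y \<in> S \<Longrightarrow> f y \<le> U" "0 \<le> U" and L: "\<And>y. y \<in> S \<Longrightarrow> L \<le> f y"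
  shows "measure \<nu> S * L \<le> enn2real (\<integral>\<^sup>+y\<in>S. ennreal (f y) \<partial>\<nu>)"
    and "enn2real (\<integral>\<^sup>+y\<in>S. ennreal (f y) \<partial>\<nu>) \<le> measure \<nu> S * U"
proof -
  have em: "emeasure \<nu> S = ennreal (measure \<nu> S)"
    using fin by (intro emeasure_eq_ennreal_measure) auto
  have "(\<integral>\<^sup>+y\<in>S. ennreal (f y) \<partial>\<nu>) \<le> (\<integral>\<^sup>+y. ennreal U * indicator S y \<partial>\<nu>)"
    using U by (intro nn_integral_mono) (auto simp: indicator_def)
  also have "\<dots> = ennreal (measure \<nu> S * U)"
    using S em U by (simp add: nn_integral_cmult_indicator ennreal_mult mult.commute)
  finally have up: "(\<integral>\<^sup>+y\<in>S. ennreal (f y) \<partial>\<nu>) \<le> ennreal (measure \<nu> S * U)" .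
  then show "enn2real (\<integral>\<^sup>+y\<in>S. ennreal (f y) \<partial>\<nu>) \<le> measure \<nu> S * U"
    using enn2real_mono[OF up] U by simp
  show "measure \<nu> S * L \<le> enn2real (\<integral>\<^sup>+y\<in>S. ennreal (f y) \<partial>\<nu>)"
  proof (cases "L \<le> 0")
    case True
    then show ?thesis by (metis enn2real_nonneg measure_nonneg mult_nonneg_nonpos order_trans)
  next
    case False
    have "ennreal (measure \<nu> S * L) = (\<integral>\<^sup>+y. ennreal L * indicator S y \<partial>\<nu>)"
      using S em False by (simp add: nn_integral_cmult_indicator ennreal_mult mult.commute)
    also have "\<dots> \<le> (\<integral>\<^sup>+y\<in>S. ennreal (f y) \<partial>\<nu>)"
      using L by (intro nn_integral_mono) (auto simp: indicator_def intro: ennreal_leI)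
    finally have "enn2real (ennreal (measure \<nu> S * L)) \<le> enn2real (\<integral>\<^sup>+y\<in>S. ennreal (f y) \<partial>\<nu>)"
      by (rule enn2real_mono[OF _ le_less_trans[OF up ennreal_less_top]])
    then show ?thesis using False by simp
  qed
qed

lemma ennreal_le_less_imp_less:
  assumes "ennreal a \<le> S" "S < ennreal c" "0 < c"
  shows "a < c"
proof (cases "0 \<le> a")
  case True
  have "ennreal a < ennreal c" using assms(1,2) by (rule le_less_trans)
  with True show ?thesis by (simp add: ennreal_less_iff)
next
  case False
  with assms(3) show ?thesis by simp
qed

lemma SUP_ennreal_less_imp_less:
  assumes "(SUP x\<in>A. ennreal (f x)) < ennreal c" "x \<in> A" "0 < c"
  shows "f x < c"
proof -
  have "ennreal (f x) \<le> (SUP x\<in>A. ennreal (f x))" using assms(2) by (rule SUP_upper)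
  then show ?thesis using assms(1,3) by (rule ennreal_le_less_imp_less)
qed

lemma eventually_limsup_less:
  fixes f :: "'a \<Rightarrow> nat \<Rightarrow> real"
  assumes "((\<lambda>s. limsup (\<lambda>n. ereal (f s n))) \<longlongrightarrow> 0) F" "0 < \<eta>"
  shows "eventually (\<lambda>s. eventually (\<lambda>n. f s n < \<eta>) sequentially) F"
proof -
  have "eventually (\<lambda>s. limsup (\<lambda>n. ereal (f s n)) < ereal \<eta>) F"
    using order_tendstoD(2)[OF assms(1)] assms(2) by simp
  then show ?thesis
  proof (rule eventually_mono)
    fix s assume "limsup (\<lambda>n. ereal (f s n)) < ereal \<eta>"
    then have "eventually (\<lambda>n. ereal (f s n) < ereal \<eta>) sequentially" by (rule Limsup_lessD)
    then show "eventually (\<lambda>n. f s n < \<eta>) sequentially" by simp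
  qed
qed

lemma sum_weighted_deviation:
  fixes c e :: real
  assumes "\<And>v. v \<in> S \<Longrightarrow> \<bar>c - f v\<bar> \<le> e" "\<And>v. v \<in> S \<Longrightarrow> 0 \<le> u v"
  shows "\<bar>c * (\<Sum>v\<in>S. u v) - (\<Sum>v\<in>S. f v * u v)\<bar> \<le> e * (\<Sum>v\<in>S. u v)"
proof -
  have "\<bar>c * (\<Sum>v\<in>S. u v) - (\<Sum>v\<in>S. f v * u v)\<bar> = \<bar>\<Sum>v\<in>S. (c - f v) * u v\<bar>"
    by (simp add: sum_distrib_left sum_subtractf left_diff_distrib)
  also have "\<dots> \<le> (\<Sum>v\<in>S. \<bar>(c - f v) * u v\<bar>)"
    by (rule sum_abs)
  also have "\<dots> = (\<Sum>v\<in>S. \<bar>c - f v\<bar> * u v)"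
    using assms(2) by (intro sum.cong) (auto simp: abs_mult)
  also have "\<dots> \<le> (\<Sum>v\<in>S. e * u v)"
    using assms by (intro sum_mono mult_right_mono) auto
  finally show ?thesis by (simp add: sum_distrib_left)
qed

lemma nat_floor_add_one_step:
  fixes c t :: real
  assumes "0 < c" "0 \<le> c * t"
  shows "nat \<lfloor>c * (t + 1 / c)\<rfloor> = Suc (nat \<lfloor>c * t\<rfloor>)"
proof -
  have "c * (t + 1 / c) = c * t + 1" using assms(1) by (simp add: distrib_left)
  then show ?thesis using assms(2) by (simp add: nat_add_distrib)
qed

lemma half_lt_if_abs_diff_gt:
  fixes e G Q :: real
  shows "Q < e/2 \<Longrightarrow> 0 \<le> Q \<Longrightarrow> e < \<bar>G - Q\<bar> \<Longrightarrow> 0 \<le> G \<Longrightarrow> e/2 < G"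
  by linarith

lemma abs_half_sum_diff_le:
  fixes a b c d p e \<delta> :: real
  assumes "\<bar>a - c\<bar> \<le> e" "\<bar>b - d\<bar> \<le> e" "\<bar>c - p\<bar> \<le> \<delta>" "\<bar>d - p\<bar> \<le> \<delta>"
  shows "\<bar>(a + b) / 2 - p\<bar> \<le> e + \<delta>"
  using assms by (auto simp: abs_le_iff field_simps)

text \<open>In the application \<open>G\<close> is the rescaled kernel at the vertex nearest to \<open>x\<close>, \<open>N\<close> the
  graph measure of a small ball of \<open>\<nu>\<close>-measure \<open>\<mu>\<close>, and \<open>Q\<close> the kernel summed against the
  vertex weights of that ball.\<close>
lemma ratio_estimate:
  fixes \<beta> c \<mu> qx Qm \<epsilon> G N Q e1 :: real
  assumes "0 < \<beta>" "0 < c" "c \<le> \<mu>" "0 \<le> qx" "qx \<le> Qm" "0 < \<epsilon>"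
    and G: "\<bar>G * N - \<beta> * Q\<bar> \<le> \<epsilon>/4 * N"
    and N: "\<bar>N / \<beta> - \<mu>\<bar> \<le> e1" "e1 \<le> c/2" "e1 * (Qm + 1) \<le> c * \<epsilon> / 32"
    and Q: "\<bar>Q - qx * \<mu>\<bar> \<le> c * \<epsilon> / 32 + \<epsilon> / 8 * \<mu>"
  shows "\<bar>G - qx\<bar> \<le> 5/8 * \<epsilon>"
proof -
  define Nb where "Nb = N / \<beta>"
  have "0 \<le> e1" using N(1) by linarith
  have Nb_ge: "\<mu> / 2 \<le> Nb" using N assms(3) unfolding Nb_def by linarith
  then have "0 < Nb" using assms(2,3) by linarith
  have NNb: "N = \<beta> * Nb" using assms(1) unfolding Nb_def by simp
  have "G * N - \<beta> * Q = (\<beta> * Nb) * (G - Q / Nb)"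
    using NNb \<open>0 < Nb\<close> by (simp add: field_simps)
  then have "\<beta> * Nb * \<bar>G - Q / Nb\<bar> = \<bar>G * N - \<beta> * Q\<bar>"
    using \<open>0 < Nb\<close> assms(1) by (simp add: abs_mult)
  also have "\<dots> \<le> \<beta> * Nb * (\<epsilon>/4)" using G NNb by (simp add: mult.commute)
  finally have G_close: "\<bar>G - Q / Nb\<bar> \<le> \<epsilon>/4"
    using assms(1) \<open>0 < Nb\<close> by (simp add: mult_le_cancel_left_pos)
  have "\<bar>qx * (\<mu> - Nb)\<bar> \<le> Qm * e1"
    using assms(4,5) N(1) unfolding Nb_def abs_mult
    by (intro mult_mono) (auto simp: abs_minus_commute)
  moreover have "Qm * e1 \<le> e1 * (Qm + 1)" using \<open>0 \<le> e1\<close> by (simp add: algebra_simps)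
  then have "Qm * e1 \<le> c * \<epsilon> / 32" using N(3) by linarith
  ultimately have "\<bar>Q - qx * Nb\<bar> \<le> (c/2) * (\<epsilon>/8) + \<epsilon>/8 * \<mu>"
    using Q by (simp add: abs_le_iff right_diff_distrib)
  also have "\<dots> \<le> Nb * (\<epsilon>/8) + Nb * (\<epsilon>/4)"
  proof (rule add_mono)
    show "c/2 * (\<epsilon>/8) \<le> Nb * (\<epsilon>/8)" using Nb_ge assms(3,6) by (intro mult_right_mono) auto
    show "\<epsilon>/8 * \<mu> \<le> Nb * (\<epsilon>/4)" using Nb_ge assms(6) by (simp add: field_simps)
  qed
  finally have "\<bar>Q - qx * Nb\<bar> / Nb \<le> 3/8 * \<epsilon>"
    using \<open>0 < Nb\<close> by (simp add: divide_le_eq algebra_simps)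
  moreover have "\<bar>Q / Nb - qx\<bar> = \<bar>Q - qx * Nb\<bar> / Nb"
  proof -
    have "Q / Nb - qx = (Q - qx * Nb) / Nb" using \<open>0 < Nb\<close> by (simp add: diff_divide_distrib)
    then show ?thesis using \<open>0 < Nb\<close> by (simp add: abs_divide)
  qed
  ultimately have "\<bar>Q / Nb - qx\<bar> \<le> 3/8 * \<epsilon>" by simp
  then show ?thesis using G_close by linarith
qed

locale graph_approximation =
  fixes F :: "'e::metric_space set" and \<rho> :: 'e and \<nu> :: "'e measure"
    and q :: "real \<Rightarrow> 'e \<Rightarrow> real"
    and V :: "nat \<Rightarrow> 'e set" and adj :: "nat \<Rightarrow> 'e \<Rightarrow> 'e \<Rightarrow> bool"
    and M :: "('e \<Rightarrow> 'e \<Rightarrow> real) measure"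
    and \<alpha> \<beta> \<gamma> :: "nat \<Rightarrow> real" and g :: "nat \<Rightarrow> 'e \<Rightarrow> 'e"
  assumes F_proper: "\<And>x r. 0 < r \<Longrightarrow> compact (F \<inter> cball x r)"
    and rho_F: "\<rho> \<in> F"
    and nu_sets: "sets \<nu> = sets borel"
    and nu_outside_F: "emeasure \<nu> (UNIV - F) = 0"
    and nu_locally_finite: "\<And>K. compact K \<Longrightarrow> K \<subseteq> F \<Longrightarrow> emeasure \<nu> K < \<infinity>"
    and nu_full_support: "\<And>x r. x \<in> F \<Longrightarrow> 0 < r \<Longrightarrow> 0 < emeasure \<nu> (ball x r)"
    and q_cont: "continuous_on ({0<..} \<times> F) (\<lambda>(t, x). q t x)"
    and q_nonneg: "\<And>t x. 0 < t \<Longrightarrow> x \<in> F \<Longrightarrow> 0 \<le> q t x"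
    and adj_V: "\<And>n x y. adj n x y \<Longrightarrow> y \<in> V n"
    and adj_sym: "\<And>n x y. adj n x y \<Longrightarrow> adj n y x"
    and adj_finite: "\<And>n x. finite {y. adj n x y}"
    and V_connected: "\<And>n. \<forall>x\<in>V n. \<forall>y\<in>V n. \<exists>k. (adj n ^^ k) x y"
    and V_two_points: "\<And>n. \<exists>x\<in>V n. \<exists>y\<in>V n. x \<noteq> y"
    and rho_V: "\<And>n. \<rho> \<in> V n"
    and weight_pos: "\<And>w n x y. w \<in> space M \<Longrightarrow> adj n x y \<Longrightarrow> 0 < w x y"
    and weight_sym: "\<And>w n x y. w \<in> space M \<Longrightarrow> adj n x y \<Longrightarrow> w x y = w y x"
    and \<alpha>_nonneg: "\<And>n. 0 \<le> \<alpha> n" and \<beta>_nonneg: "\<And>n. 0 \<le> \<beta> n" and \<gamma>_nonneg: "\<And>n. 0 \<le> \<gamma> n"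
    and \<alpha>_lim: "filterlim \<alpha> at_top sequentially"
    and \<beta>_lim: "filterlim \<beta> at_top sequentially"
    and \<gamma>_lim: "filterlim \<gamma> at_top sequentially"
    and g_in_V: "\<And>n x. g n x \<in> V n"
    and g_nearest: "\<And>n x v. v \<in> V n \<Longrightarrow> dist x (g n x) \<le> dist x v"
begin

definition scaled_qk :: "('e \<Rightarrow> 'e \<Rightarrow> real) \<Rightarrow> nat \<Rightarrow> real \<Rightarrow> 'e \<Rightarrow> real" where
  "scaled_qk w n t x = \<beta> n * qk w (adj n) (nat \<lfloor>\<gamma> n * t\<rfloor>) \<rho> x"

definition deviation_event :: "'e set \<Rightarrow> real set \<Rightarrow> real \<Rightarrow> nat \<Rightarrow> ('e \<Rightarrow> 'e \<Rightarrow> real) set" where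
  "deviation_event A I e n = {w. \<exists>x\<in>A. \<exists>t\<in>I. e < \<bar>scaled_qk w n t (g n x) - q t x\<bar>}"

definition mass_event :: "'e \<Rightarrow> real \<Rightarrow> real \<Rightarrow> nat \<Rightarrow> ('e \<Rightarrow> 'e \<Rightarrow> real) set" where
  "mass_event x r e n =
     {w. e < \<bar>gmeas w (adj n) (V n) (ball x r) / \<beta> n - measure \<nu> (ball x r)\<bar>}"

definition hitting_event :: "real set \<Rightarrow> 'e \<Rightarrow> real \<Rightarrow> real \<Rightarrow> nat \<Rightarrow> ('e \<Rightarrow> 'e \<Rightarrow> real) set" where
  "hitting_event I x r e n = {w. \<exists>t\<in>I. e < \<bar>hitp w (adj n) (nat \<lfloor>\<gamma> n * t\<rfloor>) \<rho> (ball x r)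
     - enn2real (\<integral>\<^sup>+y\<in>ball x r \<inter> F. ennreal (q t y) \<partial>\<nu>)\<bar>}"

definition oscillation_event :: "real set \<Rightarrow> real \<Rightarrow> real \<Rightarrow> real \<Rightarrow> nat \<Rightarrow> ('e \<Rightarrow> 'e \<Rightarrow> real) set" where
  "oscillation_event I R \<delta> e n =
     {w. \<exists>x\<in>gball (V n) (adj n) \<rho> (\<alpha> n * R). \<exists>y\<in>gball (V n) (adj n) \<rho> (\<alpha> n * R).
       real (gdist (adj n) x y) \<le> \<alpha> n * \<delta> \<and> (\<exists>t\<in>I. e < \<bar>scaled_qk w n t x - scaled_qk w n t y\<bar>)}"

definition sup_event :: "real \<Rightarrow> real \<Rightarrow> nat \<Rightarrow> ('e \<Rightarrow> 'e \<Rightarrow> real) set" where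
  "sup_event t e n = {w. \<exists>x\<in>V n. e < scaled_qk w n t x}"

definition tail_event :: "real set \<Rightarrow> real \<Rightarrow> real \<Rightarrow> nat \<Rightarrow> ('e \<Rightarrow> 'e \<Rightarrow> real) set" where
  "tail_event I R e n =
     {w. \<exists>x\<in>V n - gball (V n) (adj n) \<rho> (\<alpha> n * R). \<exists>t\<in>I. e < scaled_qk w n t x}"

lemma neighbour_exists:
  assumes "x \<in> V n"
  shows "\<exists>z. adj n x z"
proof -
  obtain y where "y \<in> V n" "y \<noteq> x" using V_two_points[of n] by metis
  with assms V_connected show ?thesis by (intro connected_has_neighbour)
qed

lemma wdeg_pos_V:
  assumes "w \<in> space M" "x \<in> V n"
  shows "0 < wdeg w (adj n) x"
proof -
  obtain z where "adj n x z" using neighbour_exists[OF assms(2)] by blast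
  with assms(1) adj_finite weight_pos show ?thesis by (intro wdeg_pos)
qed

lemma scaled_qk_nonneg:
  assumes "w \<in> space M"
  shows "0 \<le> scaled_qk w n t x"
  unfolding scaled_qk_def
  using \<beta>_nonneg[of n] qk_nonneg[where R="adj n" and w=w, OF weight_pos[OF assms, of n]]
  by (rule mult_nonneg_nonneg)

lemma scaled_qk_le_later:
  assumes w: "w \<in> space M" and bound: "\<And>v. v \<in> V n \<Longrightarrow> scaled_qk w n T v \<le> c"
    and "T \<le> t" "x \<in> V n"
  shows "scaled_qk w n t x \<le> c"
proof (cases "\<beta> n = 0")
  case True
  then show ?thesis using bound[OF rho_V] unfolding scaled_qk_def by simp
next
  case False
  then have "0 < \<beta> n" using \<beta>_nonneg[of n] by linarith
  have "qk w (adj n) (nat \<lfloor>\<gamma> n * T\<rfloor>) \<rho> v \<le> c / \<beta> n" if "v \<in> V n" for v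
    using bound[OF that] \<open>0 < \<beta> n\<close> unfolding scaled_qk_def by (simp add: pos_le_divide_eq mult.commute)
  moreover have "nat \<lfloor>\<gamma> n * T\<rfloor> \<le> nat \<lfloor>\<gamma> n * t\<rfloor>"
    using \<gamma>_nonneg[of n] \<open>T \<le> t\<close> by (intro nat_mono floor_mono mult_left_mono)
  ultimately have "qk w (adj n) (nat \<lfloor>\<gamma> n * t\<rfloor>) \<rho> x \<le> c / \<beta> n"
    by (rule qk_le_later[where R="adj n" and V="V n" and m="nat \<lfloor>\<gamma> n * T\<rfloor>", rotated 6])
      (use \<open>x \<in> V n\<close> adj_V adj_sym adj_finite weight_pos[OF w] weight_sym[OF w] neighbour_exists
        in blast)+
  then show ?thesis using \<open>0 < \<beta> n\<close> unfolding scaled_qk_def by (simp add: pos_le_divide_eq mult.commute)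
qed

lemma dist_g_le_infdist: "dist x (g n x) \<le> infdist x (V n)"
proof -
  have "V n \<noteq> {}" using rho_V by auto
  then show ?thesis unfolding infdist_def using g_nearest by (auto intro: cINF_greatest)
qed

lemma closed_F: "closed F"
  using F_proper by (rule closed_if_compact_cballs)

lemma emeasure_ball_finite: "emeasure \<nu> (ball y d) < \<infinity>"
proof (cases "0 < d")
  case True
  have K: "F \<inter> cball y d \<in> sets \<nu>" "UNIV - F \<in> sets \<nu>"
    using F_proper[OF True] closed_F nu_sets by (auto simp: borel_compact)
  have "emeasure \<nu> (ball y d) \<le> emeasure \<nu> ((F \<inter> cball y d) \<union> (UNIV - F))"
    using K by (intro emeasure_mono) auto
  also have "\<dots> \<le> emeasure \<nu> (F \<inter> cball y d) + emeasure \<nu> (UNIV - F)"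
    using K by (intro emeasure_subadditive) auto
  also have "\<dots> < \<infinity>"
    using nu_locally_finite F_proper[OF True] nu_outside_F by simp
  finally show ?thesis .
next
  case False
  then have "ball y d = {}" by simp
  then show ?thesis by (simp only: emeasure_empty) simp
qed

lemma emeasure_ball_Int_F: "emeasure \<nu> (ball y d \<inter> F) = emeasure \<nu> (ball y d)"
proof -
  have "UNIV - F \<in> null_sets \<nu>" using nu_outside_F closed_F nu_sets by auto
  then have "emeasure \<nu> (ball y d - (UNIV - F)) = emeasure \<nu> (ball y d)"
    using nu_sets by (intro emeasure_Diff_null_set) auto
  moreover have "ball y d - (UNIV - F) = ball y d \<inter> F" by auto
  ultimately show ?thesis by simp
qed

lemma measure_ball_pos:
  assumes "y \<in> F" "0 < d"
  shows "0 < measure \<nu> (ball y d)"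
proof -
  have "emeasure \<nu> (ball y d) = ennreal (measure \<nu> (ball y d))"
    using emeasure_ball_finite[of y d] by (intro emeasure_eq_ennreal_measure) auto
  then show ?thesis using nu_full_support[OF assms] by simp
qed

lemma deviation_event_split:
  "deviation_event F {T1..} e n
    \<subseteq> deviation_event (F \<inter> ball \<rho> r) {T1..T} e n \<union> deviation_event (F - ball \<rho> r) {T1..T} e n
       \<union> deviation_event F {T..} e n"
proof
  fix w assume "w \<in> deviation_event F {T1..} e n"
  then obtain x t where "x \<in> F" "T1 \<le> t" "e < \<bar>scaled_qk w n t (g n x) - q t x\<bar>"
    unfolding deviation_event_def by auto
  then show "w \<in> deviation_event (F \<inter> ball \<rho> r) {T1..T} e n \<union> deviation_event (F - ball \<rho> r) {T1..T} e n
       \<union> deviation_event F {T..} e n"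
    unfolding deviation_event_def by (cases "T \<le> t"; cases "x \<in> ball \<rho> r") auto
qed

lemma deviation_event_large_time_subset:
  assumes "0 < T" and small: "\<And>t x. T \<le> t \<Longrightarrow> x \<in> F \<Longrightarrow> q t x < \<epsilon>/2"
  shows "deviation_event F {T..} \<epsilon> n \<inter> space M \<subseteq> sup_event T (\<epsilon>/2) n"
proof
  fix w assume "w \<in> deviation_event F {T..} \<epsilon> n \<inter> space M"
  then obtain x t where w: "w \<in> space M" and x: "x \<in> F" and "T \<le> t"
    and dev: "\<epsilon> < \<bar>scaled_qk w n t (g n x) - q t x\<bar>"
    unfolding deviation_event_def by auto
  have "q t x < \<epsilon>/2" "0 \<le> q t x" using q_nonneg small x \<open>T \<le> t\<close> \<open>0 < T\<close> by auto
  then have big: "\<epsilon>/2 < scaled_qk w n t (g n x)"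
    using dev scaled_qk_nonneg[OF w] by (rule half_lt_if_abs_diff_gt)
  show "w \<in> sup_event T (\<epsilon>/2) n"
  proof (rule ccontr)
    assume "w \<notin> sup_event T (\<epsilon>/2) n"
    then have "\<And>v. v \<in> V n \<Longrightarrow> scaled_qk w n T v \<le> \<epsilon>/2" unfolding sup_event_def by auto
    then have "scaled_qk w n t (g n x) \<le> \<epsilon>/2"
      using scaled_qk_le_later[OF w _ \<open>T \<le> t\<close> g_in_V] by blast
    with big show False by simp
  qed
qed

lemma deviation_event_far_subset:
  assumes "0 < a" and small: "\<And>t x. t \<in> {a..b} \<Longrightarrow> x \<in> F - ball \<rho> r \<Longrightarrow> q t x < \<epsilon>/2"
    and outside: "\<And>x. x \<in> F - ball \<rho> r \<Longrightarrow> g n x \<notin> gball (V n) (adj n) \<rho> (\<alpha> n * R)"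
  shows "deviation_event (F - ball \<rho> r) {a..b} \<epsilon> n \<inter> space M \<subseteq> tail_event {a..b} R (\<epsilon>/2) n"
proof
  fix w assume "w \<in> deviation_event (F - ball \<rho> r) {a..b} \<epsilon> n \<inter> space M"
  then obtain x t where w: "w \<in> space M" and x: "x \<in> F - ball \<rho> r" and t: "t \<in> {a..b}"
    and dev: "\<epsilon> < \<bar>scaled_qk w n t (g n x) - q t x\<bar>"
    unfolding deviation_event_def by auto
  have "q t x < \<epsilon>/2" "0 \<le> q t x" using small q_nonneg x t \<open>0 < a\<close> by auto
  then have "\<epsilon>/2 < scaled_qk w n t (g n x)"
    using dev scaled_qk_nonneg[OF w] by (rule half_lt_if_abs_diff_gt)
  moreover have "g n x \<in> V n - gball (V n) (adj n) \<rho> (\<alpha> n * R)" using outside x g_in_V by auto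
  ultimately show "w \<in> tail_event {a..b} R (\<epsilon>/2) n" using t unfolding tail_event_def by blast
qed

lemma ball_average_scaled_qk:
  assumes w: "w \<in> space M" and fin: "finite (B \<inter> V n)"
    and close: "\<And>v. v \<in> B \<inter> V n \<Longrightarrow> \<bar>scaled_qk w n t x - scaled_qk w n t v\<bar> \<le> e"
  shows "\<bar>scaled_qk w n t x * gmeas w (adj n) (V n) B
      - \<beta> n * ((hitp w (adj n) (nat \<lfloor>\<gamma> n * t\<rfloor>) \<rho> B
                 + hitp w (adj n) (Suc (nat \<lfloor>\<gamma> n * t\<rfloor>)) \<rho> B) / 2)\<bar>
    \<le> e * gmeas w (adj n) (V n) B"
proof -
  let ?m = "nat \<lfloor>\<gamma> n * t\<rfloor>"
  have sum_eq: "(\<Sum>v\<in>B \<inter> V n. qk w (adj n) ?m \<rho> v * wdeg w (adj n) v)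
      = (hitp w (adj n) ?m \<rho> B + hitp w (adj n) (Suc ?m) \<rho> B) / 2"
    by (rule sum_qk_wdeg[where V="V n"]) (use adj_V rho_V fin wdeg_pos_V[OF w] in auto)
  have "\<beta> n * ((hitp w (adj n) ?m \<rho> B + hitp w (adj n) (Suc ?m) \<rho> B) / 2)
      = (\<Sum>v\<in>B \<inter> V n. scaled_qk w n t v * wdeg w (adj n) v)"
    unfolding scaled_qk_def by (simp only: sum_eq[symmetric] sum_distrib_left mult.assoc)
  moreover have "gmeas w (adj n) (V n) B = (\<Sum>v\<in>B \<inter> V n. wdeg w (adj n) v)"
    unfolding gmeas_def ..
  ultimately show ?thesis
    using close wdeg_pos_V[OF w] by (simp only:) (rule sum_weighted_deviation, auto intro: less_imp_le)
qed

lemma ball_integral_close: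
  assumes close: "\<And>z. z \<in> ball y \<delta> \<inter> F \<Longrightarrow> \<bar>q s z - c\<bar> < e" and "0 \<le> c" "0 < e"
  shows "\<bar>enn2real (\<integral>\<^sup>+z\<in>ball y \<delta> \<inter> F. ennreal (q s z) \<partial>\<nu>) - c * measure \<nu> (ball y \<delta>)\<bar>
    \<le> e * measure \<nu> (ball y \<delta>)"
proof -
  have S: "ball y \<delta> \<inter> F \<in> sets \<nu>" using closed_F nu_sets by auto
  have fin: "emeasure \<nu> (ball y \<delta> \<inter> F) < \<infinity>"
    using emeasure_ball_finite emeasure_ball_Int_F by simp
  have \<mu>: "measure \<nu> (ball y \<delta> \<inter> F) = measure \<nu> (ball y \<delta>)"
    unfolding measure_def emeasure_ball_Int_F ..
  have "q s z \<le> c + e" "c - e \<le> q s z" if "z \<in> ball y \<delta> \<inter> F" for z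
    using close[OF that] by linarith+
  from set_nn_integral_bounds[OF S fin this(1) _ this(2)] assms(2,3)
  show ?thesis unfolding \<mu> by (simp add: abs_le_iff algebra_simps)
qed

text \<open>The smoothed kernel at time \<open>m\<close> involves
  the walk at times \<open>m\<close> and \<open>m + 1\<close>, which correspond to \<open>t\<close> and \<open>t + 1 / \<gamma> n\<close>.\<close>
lemma near_deviation_pointwise:
  assumes w: "w \<in> space M" and t: "t \<in> {a..b}" and "0 < a"
    and x: "x \<in> F" and fin: "finite (ball y \<delta> \<inter> V n)"
    and close: "\<And>v. v \<in> ball y \<delta> \<inter> V n \<Longrightarrow> \<bar>scaled_qk w n t (g n x) - scaled_qk w n t v\<bar> \<le> \<epsilon>/4"
    and "0 < \<beta> n" "0 < \<gamma> n" "1 / \<gamma> n \<le> 1" "1 / \<gamma> n < d"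
    and unif: "\<And>s z. s \<in> {a..b+1} \<Longrightarrow> \<bar>s - t\<bar> < d \<Longrightarrow> z \<in> ball y \<delta> \<inter> F \<Longrightarrow>
      \<bar>q s z - q t x\<bar> < \<epsilon>/8"
    and mass: "\<bar>gmeas w (adj n) (V n) (ball y \<delta>) / \<beta> n - measure \<nu> (ball y \<delta>)\<bar> \<le> e1"
    and hit: "\<And>s. s \<in> {a..b+1} \<Longrightarrow> \<bar>hitp w (adj n) (nat \<lfloor>\<gamma> n * s\<rfloor>) \<rho> (ball y \<delta>)
      - enn2real (\<integral>\<^sup>+z\<in>ball y \<delta> \<inter> F. ennreal (q s z) \<partial>\<nu>)\<bar> \<le> e2"
    and c: "0 < c" "c \<le> measure \<nu> (ball y \<delta>)" "0 < \<epsilon>" "q t x \<le> Qm"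
      "e1 \<le> c/2" "e1 * (Qm + 1) \<le> c * \<epsilon> / 32" "e2 \<le> c * \<epsilon> / 32"
  shows "\<bar>scaled_qk w n t (g n x) - q t x\<bar> \<le> 5/8 * \<epsilon>"
proof -
  define m where "m = nat \<lfloor>\<gamma> n * t\<rfloor>"
  define t' where "t' = t + 1 / \<gamma> n"
  define \<mu> where "\<mu> = measure \<nu> (ball y \<delta>)"
  define h where "h = (\<lambda>s. hitp w (adj n) (nat \<lfloor>\<gamma> n * s\<rfloor>) \<rho> (ball y \<delta>))"
  define I where "I = (\<lambda>s. enn2real (\<integral>\<^sup>+z\<in>ball y \<delta> \<inter> F. ennreal (q s z) \<partial>\<nu>))"
  have "0 \<le> q t x" using q_nonneg x t \<open>0 < a\<close> by auto
  have "0 \<le> \<gamma> n * t" using \<open>0 < \<gamma> n\<close> t \<open>0 < a\<close> by simp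
  then have m': "nat \<lfloor>\<gamma> n * t'\<rfloor> = Suc m"
    unfolding t'_def m_def using \<open>0 < \<gamma> n\<close> by (rule nat_floor_add_one_step[rotated])
  have "0 < 1 / \<gamma> n" using \<open>0 < \<gamma> n\<close> by simp
  then have times: "t \<in> {a..b+1}" "t' \<in> {a..b+1}" "\<bar>t' - t\<bar> < d"
    using t \<open>1 / \<gamma> n \<le> 1\<close> \<open>1 / \<gamma> n < d\<close> unfolding t'_def atLeastAtMost_iff by linarith+
  have I_close: "\<bar>I s - q t x * \<mu>\<bar> \<le> \<epsilon>/8 * \<mu>" if "s \<in> {a..b+1}" "\<bar>s - t\<bar> < d" for s
    unfolding \<mu>_def I_def using unif[OF that] \<open>0 \<le> q t x\<close> c(3) by (intro ball_integral_close) auto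
  have "\<bar>h t - I t\<bar> \<le> e2" "\<bar>h t' - I t'\<bar> \<le> e2"
    using hit times unfolding h_def I_def by auto
  moreover have "\<bar>I t - q t x * \<mu>\<bar> \<le> \<epsilon>/8 * \<mu>" "\<bar>I t' - q t x * \<mu>\<bar> \<le> \<epsilon>/8 * \<mu>"
    using I_close times \<open>0 < 1 / \<gamma> n\<close> \<open>1 / \<gamma> n < d\<close> by auto
  ultimately have "\<bar>(h t + h t') / 2 - q t x * \<mu>\<bar> \<le> e2 + \<epsilon> / 8 * \<mu>"
    by (rule abs_half_sum_diff_le)
  then have hitting: "\<bar>(h t + h t') / 2 - q t x * \<mu>\<bar> \<le> c * \<epsilon> / 32 + \<epsilon> / 8 * \<mu>"
    using c(7) by linarith
  have average: "\<bar>scaled_qk w n t (g n x) * gmeas w (adj n) (V n) (ball y \<delta>) - \<beta> n * ((h t + h t') / 2)\<bar>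
      \<le> \<epsilon>/4 * gmeas w (adj n) (V n) (ball y \<delta>)"
    using ball_average_scaled_qk[OF w fin close] m' unfolding h_def m_def by simp
  show ?thesis
    by (rule ratio_estimate[OF \<open>0 < \<beta> n\<close> c(1) c(2)[folded \<mu>_def] \<open>0 \<le> q t x\<close> c(4,3) average
          mass[folded \<mu>_def] c(5,6) hitting])
qed

lemma ball_subset_gball:
  assumes gd: "\<And>u v. u \<in> V n \<inter> ball \<rho> R \<Longrightarrow> v \<in> V n \<inter> ball \<rho> R \<Longrightarrow>
      real (gdist (adj n) u v) \<le> C * \<alpha> n * dist u v + slack"
    and "0 \<le> C" "slack < \<alpha> n"
  shows "V n \<inter> ball \<rho> R \<subseteq> gball (V n) (adj n) \<rho> (\<alpha> n * (C * R + 1))"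
    and "finite (V n \<inter> ball \<rho> R)"
proof -
  show sub: "V n \<inter> ball \<rho> R \<subseteq> gball (V n) (adj n) \<rho> (\<alpha> n * (C * R + 1))"
  proof
    fix v assume v: "v \<in> V n \<inter> ball \<rho> R"
    then have "dist \<rho> v < R" by simp
    then have "0 < R" using zero_le_dist[of \<rho> v] by linarith
    then have "\<rho> \<in> V n \<inter> ball \<rho> R" using rho_V by auto
    from this v have "real (gdist (adj n) \<rho> v) \<le> C * \<alpha> n * dist \<rho> v + slack" by (rule gd)
    also have "\<dots> \<le> C * \<alpha> n * R + slack"
      using v \<open>0 \<le> C\<close> \<alpha>_nonneg[of n] by (intro add_right_mono mult_left_mono) auto
    also have "\<dots> < \<alpha> n * (C * R + 1)" using \<open>slack < \<alpha> n\<close> by (simp add: algebra_simps)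
    finally show "v \<in> gball (V n) (adj n) \<rho> (\<alpha> n * (C * R + 1))"
      using v unfolding gball_def by auto
  qed
  have "finite {v \<in> V n. real (gdist (adj n) \<rho> v) \<le> \<alpha> n * (C * R + 1)}"
    by (rule finite_gdist_le[where R="adj n"]) (use adj_finite V_connected rho_V in auto)
  then show "finite (V n \<inter> ball \<rho> R)"
    by (rule finite_subset[rotated]) (use sub in \<open>auto simp: gball_def\<close>)
qed

lemma scaled_qk_close_if_not_oscillating:
  assumes osc: "w \<notin> oscillation_event I (C * R + 1) \<delta>' e n" and "t \<in> I"
    and gd: "\<And>u v. u \<in> V n \<inter> ball \<rho> R \<Longrightarrow> v \<in> V n \<inter> ball \<rho> R \<Longrightarrow>
      real (gdist (adj n) u v) \<le> C * \<alpha> n * dist u v + slack"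
    and "0 \<le> C" "slack \<le> \<alpha> n * (\<delta>'/2)" "slack < \<alpha> n" "3 * C * \<delta> \<le> \<delta>'/2"
    and u: "u \<in> V n \<inter> ball \<rho> R" and v: "v \<in> V n \<inter> ball \<rho> R" and "dist u v \<le> 3 * \<delta>"
  shows "\<bar>scaled_qk w n t u - scaled_qk w n t v\<bar> \<le> e"
proof -
  have "C * \<alpha> n * dist u v \<le> C * \<alpha> n * (3 * \<delta>)"
    using \<open>dist u v \<le> 3 * \<delta>\<close> \<open>0 \<le> C\<close> \<alpha>_nonneg[of n] by (intro mult_left_mono) auto
  also have "\<dots> = \<alpha> n * (3 * C * \<delta>)" by simp
  also have "\<dots> \<le> \<alpha> n * (\<delta>'/2)"
    using \<open>3 * C * \<delta> \<le> \<delta>'/2\<close> \<alpha>_nonneg[of n] by (rule mult_left_mono)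
  finally have "real (gdist (adj n) u v) \<le> \<alpha> n * \<delta>'"
    using gd[OF u v] \<open>slack \<le> \<alpha> n * (\<delta>'/2)\<close> by (simp add: field_simps)
  then show ?thesis
    using osc ball_subset_gball(1)[OF gd \<open>0 \<le> C\<close> \<open>slack < \<alpha> n\<close>] u v \<open>t \<in> I\<close>
    unfolding oscillation_event_def by force
qed

text \<open>At every \<open>n\<close> at which the graph metric, the scales and the density of \<open>V n\<close> are under
  control, a deviation near \<open>\<rho>\<close> is caused by an oscillation of the kernel or by a failure of
  (A1R)(c),(d) on one of finitely many small balls.\<close>
lemma near_deviation_subset:
  fixes C slack \<delta> \<delta>' d Qm c e1 e2 :: real
  assumes "0 < a" "0 < \<epsilon>" "0 < \<delta>" "\<delta> \<le> 1" "2 * \<delta> < d" "0 \<le> C" "3 * C * \<delta> \<le> \<delta>'/2"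
    and unif: "\<And>s t x y. s \<in> {a..b+1} \<Longrightarrow> t \<in> {a..b+1} \<Longrightarrow> x \<in> F \<inter> cball \<rho> (r+1) \<Longrightarrow>
      y \<in> F \<inter> cball \<rho> (r+1) \<Longrightarrow> \<bar>s - t\<bar> < d \<Longrightarrow> dist x y < d \<Longrightarrow> \<bar>q s x - q t y\<bar> < \<epsilon>/8"
    and Qm: "\<And>t x. t \<in> {a..b+1} \<Longrightarrow> x \<in> F \<inter> cball \<rho> (r+1) \<Longrightarrow> q t x \<le> Qm"
    and Y: "Y \<subseteq> F \<inter> cball \<rho> r" "F \<inter> cball \<rho> r \<subseteq> (\<Union>y\<in>Y. ball y \<delta>)"
    and c: "0 < c" "\<And>y. y \<in> Y \<Longrightarrow> c \<le> measure \<nu> (ball y \<delta>)"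
      "e1 \<le> c/2" "e1 * (Qm + 1) \<le> c * \<epsilon> / 32" "e2 \<le> c * \<epsilon> / 32"
    and gd: "\<And>u v. u \<in> V n \<inter> ball \<rho> (r+1) \<Longrightarrow> v \<in> V n \<inter> ball \<rho> (r+1) \<Longrightarrow>
      real (gdist (adj n) u v) \<le> C * \<alpha> n * dist u v + slack"
    and slack: "slack \<le> \<alpha> n * (\<delta>'/2)" "slack < \<alpha> n"
    and scales: "0 < \<beta> n" "1 \<le> \<gamma> n" "1 / \<gamma> n < d"
    and dense: "\<And>x. x \<in> ball \<rho> r \<inter> F \<Longrightarrow> infdist x (V n) < \<delta>"
  shows "deviation_event (F \<inter> ball \<rho> r) {a..b} \<epsilon> n \<inter> space M
    \<subseteq> oscillation_event {a..b} (C * (r+1) + 1) \<delta>' (\<epsilon>/4) n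
       \<union> (\<Union>y\<in>Y. mass_event y \<delta> e1 n \<union> hitting_event {a..b+1} y \<delta> e2 n)"
proof
  fix w assume "w \<in> deviation_event (F \<inter> ball \<rho> r) {a..b} \<epsilon> n \<inter> space M"
  then obtain x t where w: "w \<in> space M" and x: "x \<in> F" "dist \<rho> x < r" and t: "t \<in> {a..b}"
    and dev: "\<epsilon> < \<bar>scaled_qk w n t (g n x) - q t x\<bar>"
    unfolding deviation_event_def by auto
  show "w \<in> oscillation_event {a..b} (C * (r+1) + 1) \<delta>' (\<epsilon>/4) n
       \<union> (\<Union>y\<in>Y. mass_event y \<delta> e1 n \<union> hitting_event {a..b+1} y \<delta> e2 n)"
  proof (rule ccontr)
    assume "\<not> ?thesis"
    then have osc: "w \<notin> oscillation_event {a..b} (C * (r+1) + 1) \<delta>' (\<epsilon>/4) n"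
      and good: "\<And>y. y \<in> Y \<Longrightarrow> w \<notin> mass_event y \<delta> e1 n \<and> w \<notin> hitting_event {a..b+1} y \<delta> e2 n"
      by auto
    obtain y where y: "y \<in> Y" "dist y x < \<delta>" using x Y(2) by force
    have yK: "y \<in> F" "dist \<rho> y \<le> r" using Y(1) y(1) by auto
    have "dist x (g n x) < \<delta>" using dist_g_le_infdist[of x n] dense[of x] x by (simp add: dist_commute)
    have "dist \<rho> (g n x) \<le> dist \<rho> x + dist x (g n x)" by (rule dist_triangle)
    then have gx: "g n x \<in> V n \<inter> ball \<rho> (r+1)"
      using g_in_V x \<open>dist x (g n x) < \<delta>\<close> \<open>\<delta> \<le> 1\<close> by auto
    have ball_y: "v \<in> V n \<inter> ball \<rho> (r+1)" if "v \<in> ball y \<delta> \<inter> V n" for v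
      using that yK dist_triangle[of \<rho> v y] \<open>\<delta> \<le> 1\<close> by auto
    have close: "\<bar>scaled_qk w n t (g n x) - scaled_qk w n t v\<bar> \<le> \<epsilon>/4" if v: "v \<in> ball y \<delta> \<inter> V n" for v
    proof (rule scaled_qk_close_if_not_oscillating[OF osc t gd \<open>0 \<le> C\<close> slack
          \<open>3 * C * \<delta> \<le> \<delta>'/2\<close> gx ball_y[OF v]])
      have "dist (g n x) v \<le> dist (g n x) x + dist x y + dist y v"
        using dist_triangle[of "g n x" v x] dist_triangle[of x v y] by linarith
      then show "dist (g n x) v \<le> 3 * \<delta>"
        using \<open>dist x (g n x) < \<delta>\<close> y(2) v by (simp add: dist_commute)
    qed
    have unif_x: "\<bar>q s z - q t x\<bar> < \<epsilon>/8"
      if "s \<in> {a..b+1}" "\<bar>s - t\<bar> < d" "z \<in> ball y \<delta> \<inter> F" for s z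
    proof (rule unif)
      show "z \<in> F \<inter> cball \<rho> (r+1)"
        using that(3) yK dist_triangle[of \<rho> z y] \<open>\<delta> \<le> 1\<close> by auto
      show "dist z x < d"
        using that(3) y(2) dist_triangle[of z x y] \<open>2 * \<delta> < d\<close> by (simp add: dist_commute)
    qed (use that t x in auto)
    have "\<bar>scaled_qk w n t (g n x) - q t x\<bar> \<le> 5/8 * \<epsilon>"
    proof (rule near_deviation_pointwise[OF w t \<open>0 < a\<close> x(1)])
      show "finite (ball y \<delta> \<inter> V n)"
        using ball_subset_gball(2)[OF gd \<open>0 \<le> C\<close> slack(2)]
        by (rule finite_subset[rotated]) (use ball_y in auto)
      show "0 < \<gamma> n" "1 / \<gamma> n \<le> 1" using scales(2) by auto
      show "q t x \<le> Qm" using Qm t x by auto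
      show "c \<le> measure \<nu> (ball y \<delta>)" using c(2) y(1) .
      show "\<bar>gmeas w (adj n) (V n) (ball y \<delta>) / \<beta> n - measure \<nu> (ball y \<delta>)\<bar> \<le> e1"
        using good[OF y(1)] unfolding mass_event_def by simp
      show "\<bar>hitp w (adj n) (nat \<lfloor>\<gamma> n * s\<rfloor>) \<rho> (ball y \<delta>)
          - enn2real (\<integral>\<^sup>+z\<in>ball y \<delta> \<inter> F. ennreal (q s z) \<partial>\<nu>)\<bar> \<le> e2" if "s \<in> {a..b+1}" for s
        using good[OF y(1)] that unfolding hitting_event_def by (auto simp: not_less)
    qed (use close unif_x scales c(1,3-5) \<open>0 < \<epsilon>\<close> in auto)
    with dev \<open>0 < \<epsilon>\<close> show False by linarith
  qed
qed

lemma finite_ball_net: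
  assumes "0 < r" "0 < \<delta>"
  obtains Y c where "finite Y" "Y \<subseteq> F \<inter> cball \<rho> r" "F \<inter> cball \<rho> r \<subseteq> (\<Union>y\<in>Y. ball y \<delta>)"
    "0 < c" "\<And>y. y \<in> Y \<Longrightarrow> c \<le> measure \<nu> (ball y \<delta>)"
proof -
  have "F \<inter> cball \<rho> r \<subseteq> (\<Union>y\<in>F \<inter> cball \<rho> r. ball y \<delta>)"
  proof
    fix x assume "x \<in> F \<inter> cball \<rho> r"
    with assms(2) show "x \<in> (\<Union>y\<in>F \<inter> cball \<rho> r. ball y \<delta>)" by (intro UN_I[of x]) auto
  qed
  then obtain Y where Y: "Y \<subseteq> F \<inter> cball \<rho> r" "finite Y" "F \<inter> cball \<rho> r \<subseteq> (\<Union>y\<in>Y. ball y \<delta>)"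
    by (rule compactE_image[OF F_proper[OF assms(1)] open_ball])
  have "Y \<noteq> {}" using Y(3) rho_F assms(1) by auto
  define c where "c = Min ((\<lambda>y. measure \<nu> (ball y \<delta>)) ` Y)"
  have "0 < c" "\<And>y. y \<in> Y \<Longrightarrow> c \<le> measure \<nu> (ball y \<delta>)"
    unfolding c_def using Y \<open>Y \<noteq> {}\<close> measure_ball_pos assms(2) by (auto simp: Min_gr_iff)
  with Y show thesis by (intro that) auto
qed

lemma eventually_scales:
  assumes "slack \<in> o(\<alpha>)" "\<And>n. 0 \<le> slack n" "0 < \<kappa>" "0 < d"
  shows "eventually (\<lambda>n. 0 < \<beta> n \<and> 1 \<le> \<gamma> n \<and> 1 / \<gamma> n < d \<and>
    slack n \<le> \<alpha> n * \<kappa> \<and> slack n < \<alpha> n) sequentially"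
proof -
  have "eventually (\<lambda>n. 1 \<le> \<alpha> n) sequentially" "eventually (\<lambda>n. 1 \<le> \<beta> n) sequentially"
      "eventually (\<lambda>n. max 1 (2 / d) \<le> \<gamma> n) sequentially"
    using \<alpha>_lim \<beta>_lim \<gamma>_lim unfolding filterlim_at_top by blast+
  moreover have "eventually (\<lambda>n. norm (slack n) \<le> min \<kappa> (1/2) * norm (\<alpha> n)) sequentially"
    using landau_o.smallD[OF assms(1)] assms(3) by simp
  ultimately show ?thesis
  proof eventually_elim
    case (elim n)
    then have slack_le: "slack n \<le> min \<kappa> (1/2) * \<alpha> n" using assms(2) by simp
    have "min \<kappa> (1/2) * \<alpha> n \<le> \<kappa> * \<alpha> n"
      using elim(1) by (intro mult_right_mono) auto
    with slack_le have "slack n \<le> \<kappa> * \<alpha> n" by (rule order_trans)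
    have "(2 * min \<kappa> (1/2)) * \<alpha> n \<le> 1 * \<alpha> n"
      using elim(1) by (intro mult_right_mono) auto
    then have "2 * (min \<kappa> (1/2) * \<alpha> n) \<le> \<alpha> n" by (simp only: mult.assoc mult_1)
    with slack_le elim(1) have "slack n < \<alpha> n" by linarith
    moreover have "1 / \<gamma> n < d"
    proof -
      have "2 \<le> \<gamma> n * d" using elim(3) assms(4) by (simp add: divide_le_eq)
      then show ?thesis using elim(3) by (simp add: divide_less_eq mult.commute)
    qed
    ultimately show ?case using elim(2,3) \<open>slack n \<le> \<kappa> * \<alpha> n\<close> by (simp add: mult.commute)
  qed
qed

end

locale heat_kernel_approximation = graph_approximation +
  assumes A1a_lower: "\<exists>c>0. \<forall>n. \<forall>x\<in>V n. \<forall>y\<in>V n. c * \<alpha> n * dist x y \<le> real (gdist (adj n) x y)"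
    and A1a_upper: "\<exists>\<alpha>t :: nat \<Rightarrow> real. (\<forall>n. 0 \<le> \<alpha>t n) \<and> \<alpha>t \<in> o(\<alpha>) \<and>
       (\<forall>r>0. \<exists>c n0. \<forall>n\<ge>n0. \<forall>x\<in>V n \<inter> ball \<rho> r. \<forall>y\<in>V n \<inter> ball \<rho> r.
          real (gdist (adj n) x y) \<le> c * \<alpha> n * dist x y + \<alpha>t n)"
    and A1b: "\<And>r. 0 < r \<Longrightarrow> (\<lambda>n. SUP x\<in>ball \<rho> r \<inter> F. ennreal (infdist x (V n))) \<longlonglongrightarrow> 0"
    and A1c: "\<And>x r e. x \<in> F \<Longrightarrow> 0 < r \<Longrightarrow> 0 < e \<Longrightarrow>
       (\<lambda>n. outer_prob M (mass_event x r e n)) \<longlonglongrightarrow> 0"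
    and A1d: "\<And>a b x r e. 0 < a \<Longrightarrow> a \<le> b \<Longrightarrow> x \<in> F \<Longrightarrow> 0 < r \<Longrightarrow> 0 < e \<Longrightarrow>
       (\<lambda>n. outer_prob M (hitting_event {a..b} x r e n)) \<longlonglongrightarrow> 0"
    and A2: "\<And>a b R e. 0 < a \<Longrightarrow> a \<le> b \<Longrightarrow> 0 < R \<Longrightarrow> 0 < e \<Longrightarrow>
       ((\<lambda>\<delta>. limsup (\<lambda>n. ereal (outer_prob M (oscillation_event {a..b} R \<delta> e n)))) \<longlongrightarrow> 0)
         (at_right 0)"
    and midpoint: "midpoint_property F"
    and A3a_time: "((\<lambda>t. SUP x\<in>F. ennreal (q t x)) \<longlongrightarrow> 0) at_top"
    and A3a_space: "\<And>a b. 0 < a \<Longrightarrow> a \<le> b \<Longrightarrow>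
       ((\<lambda>r. SUP x\<in>F - ball \<rho> r. SUP t\<in>{a..b}. ennreal (q t x)) \<longlongrightarrow> 0) at_top"
    and A3b_time: "\<And>e. 0 < e \<Longrightarrow>
       ((\<lambda>t. limsup (\<lambda>n. ereal (outer_prob M (sup_event t e n)))) \<longlongrightarrow> 0) at_top"
    and A3b_space: "\<And>a b e. 0 < a \<Longrightarrow> a \<le> b \<Longrightarrow> 0 < e \<Longrightarrow>
       ((\<lambda>R. limsup (\<lambda>n. ereal (outer_prob M (tail_event {a..b} R e n)))) \<longlongrightarrow> 0) at_top"
begin

lemma graph_metric_upper_bound:
  assumes "0 < R"
  obtains C slack n0 where "0 \<le> C" "\<And>n. 0 \<le> slack n" "slack \<in> o(\<alpha>)"
    "\<And>n u v. n0 \<le> n \<Longrightarrow> u \<in> V n \<inter> ball \<rho> R \<Longrightarrow> v \<in> V n \<inter> ball \<rho> R \<Longrightarrow>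
      real (gdist (adj n) u v) \<le> C * \<alpha> n * dist u v + slack n"
proof -
  obtain slack C0 n0 where slack: "\<forall>n. 0 \<le> slack n" "slack \<in> o(\<alpha>)"
    and gd: "\<forall>n\<ge>n0. \<forall>u\<in>V n \<inter> ball \<rho> R. \<forall>v\<in>V n \<inter> ball \<rho> R.
      real (gdist (adj n) u v) \<le> C0 * \<alpha> n * dist u v + slack n"
    using A1a_upper assms by blast
  show thesis
  proof (rule that[of "\<bar>C0\<bar>" slack n0])
    fix n u v assume "n0 \<le> n" "u \<in> V n \<inter> ball \<rho> R" "v \<in> V n \<inter> ball \<rho> R"
    then have "real (gdist (adj n) u v) \<le> C0 * \<alpha> n * dist u v + slack n" using gd by blast
    moreover have "C0 * \<alpha> n * dist u v \<le> \<bar>C0\<bar> * \<alpha> n * dist u v"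
      using \<alpha>_nonneg[of n] by (intro mult_right_mono) auto
    ultimately show "real (gdist (adj n) u v) \<le> \<bar>C0\<bar> * \<alpha> n * dist u v + slack n"
      by linarith
  qed (use slack in auto)
qed

lemma large_time_control:
  assumes "0 < \<epsilon>" "0 < \<eta>"
  obtains T where "S \<le> T" "\<And>t x. T \<le> t \<Longrightarrow> x \<in> F \<Longrightarrow> q t x < \<epsilon>/2"
    "eventually (\<lambda>n. outer_prob M (sup_event T (\<epsilon>/2) n) < \<eta>) sequentially"
proof -
  have "eventually (\<lambda>t. (SUP x\<in>F. ennreal (q t x)) < ennreal (\<epsilon>/2)) at_top"
    using order_tendstoD(2)[OF A3a_time] assms(1) by simp
  moreover have "eventually (\<lambda>t. eventually (\<lambda>n. outer_prob M (sup_event t (\<epsilon>/2) n) < \<eta>)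
      sequentially) at_top"
    using A3b_time assms by (intro eventually_limsup_less) auto
  moreover have "eventually (\<lambda>t. S \<le> t) at_top" by (rule eventually_ge_at_top)
  ultimately have "eventually (\<lambda>t. (SUP x\<in>F. ennreal (q t x)) < ennreal (\<epsilon>/2) \<and>
      eventually (\<lambda>n. outer_prob M (sup_event t (\<epsilon>/2) n) < \<eta>) sequentially \<and> S \<le> t) at_top"
    by (intro eventually_conj)
  then obtain T where T: "\<And>t. T \<le> t \<Longrightarrow> (SUP x\<in>F. ennreal (q t x)) < ennreal (\<epsilon>/2) \<and>
      eventually (\<lambda>n. outer_prob M (sup_event t (\<epsilon>/2) n) < \<eta>) sequentially \<and> S \<le> t"
    unfolding eventually_at_top_linorder by blast
  show thesis
  proof (rule that[of T])
    fix t x assume "T \<le> t" "x \<in> F"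
    have "(SUP x\<in>F. ennreal (q t x)) < ennreal (\<epsilon>/2)" using T[OF \<open>T \<le> t\<close>] by blast
    then show "q t x < \<epsilon>/2" using \<open>x \<in> F\<close> by (rule SUP_ennreal_less_imp_less) (use assms(1) in simp)
  qed (use T in auto)
qed

text \<open>A point \<open>x\<close> far from \<open>\<rho>\<close> is linked to \<open>\<rho>\<close> through a point \<open>z\<close> at moderate distance
  (midpoint property); \<open>z\<close> is close to \<open>V n\<close> by (A1R)(b), hence so is \<open>x\<close> relative to its
  distance from \<open>\<rho>\<close>, and the lower bound in (A1R)(a) turns this into graph distance.\<close>
lemma eventually_g_outside_gball:
  assumes "0 < R"
  obtains r where "0 < r"
    "eventually (\<lambda>n. \<forall>x\<in>F. r \<le> dist \<rho> x \<longrightarrow> g n x \<notin> gball (V n) (adj n) \<rho> (\<alpha> n * R))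
       sequentially"
proof -
  obtain c where c: "0 < c" "\<And>n x y. x \<in> V n \<Longrightarrow> y \<in> V n \<Longrightarrow>
      c * \<alpha> n * dist x y \<le> real (gdist (adj n) x y)"
    using A1a_lower by blast
  define s where "s = R / c + 1"
  have "0 < s" using assms c by (simp add: s_def add_pos_pos)
  have "eventually (\<lambda>n. (SUP x\<in>ball \<rho> (2 * s) \<inter> F. ennreal (infdist x (V n))) < ennreal 1)
      sequentially"
    using order_tendstoD(2)[OF A1b[of "2 * s"]] \<open>0 < s\<close> by simp
  then have "eventually (\<lambda>n. \<forall>x\<in>F. 2 * s \<le> dist \<rho> x \<longrightarrow>
      g n x \<notin> gball (V n) (adj n) \<rho> (\<alpha> n * R)) sequentially"
  proof eventually_elim
    case (elim n)
    show ?case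
    proof (intro ballI impI)
      fix x assume "x \<in> F" "2 * s \<le> dist \<rho> x"
      then have "s \<le> dist \<rho> x" using \<open>0 < s\<close> by linarith
      then obtain z where z: "z \<in> F" "s \<le> dist \<rho> z" "dist \<rho> z < 2 * s"
          "dist z x + dist \<rho> z \<le> dist \<rho> x"
        by (rule midpoint_property_annulus[OF midpoint rho_F \<open>x \<in> F\<close> \<open>0 < s\<close>])
      have "z \<in> ball \<rho> (2 * s) \<inter> F" using z by simp
      with elim have "infdist z (V n) < 1" by (rule SUP_ennreal_less_imp_less) simp
      then have "dist z (g n z) < 1" using dist_g_le_infdist[of z n] by linarith
      have "dist x (g n x) \<le> dist x (g n z)" using g_nearest g_in_V by blast
      also have "\<dots> \<le> dist x z + dist z (g n z)" by (rule dist_triangle)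
      finally have "dist \<rho> x < dist \<rho> (g n x) + dist x z + 1"
        using \<open>dist z (g n z) < 1\<close> dist_triangle[of \<rho> x "g n x"] by (simp add: dist_commute)
      then have "R / c \<le> dist \<rho> (g n x)"
        using z(2,4) dist_commute[of x z] unfolding s_def by linarith
      then have "c * \<alpha> n * (R / c) \<le> c * \<alpha> n * dist \<rho> (g n x)"
        using c(1) \<alpha>_nonneg by (intro mult_left_mono) auto
      also have "\<dots> \<le> real (gdist (adj n) \<rho> (g n x))" using c(2) rho_V g_in_V by blast
      finally show "g n x \<notin> gball (V n) (adj n) \<rho> (\<alpha> n * R)"
        using c(1) unfolding gball_def by auto
    qed
  qed
  then show thesis using that[of "2 * s"] \<open>0 < s\<close> by simp
qed

lemma far_deviation_control:
  assumes "0 < a" "a \<le> b" "0 < \<epsilon>" "0 < \<eta>"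
  obtains r where "0 < r"
    "eventually (\<lambda>n. outer_prob M (deviation_event (F - ball \<rho> r) {a..b} \<epsilon> n) < \<eta>) sequentially"
proof -
  have "eventually (\<lambda>r. (SUP x\<in>F - ball \<rho> r. SUP t\<in>{a..b}. ennreal (q t x)) < ennreal (\<epsilon>/2)) at_top"
    using order_tendstoD(2)[OF A3a_space[OF assms(1,2)]] assms(3) by simp
  then obtain r1 where r1: "\<And>r. r1 \<le> r \<Longrightarrow>
      (SUP x\<in>F - ball \<rho> r. SUP t\<in>{a..b}. ennreal (q t x)) < ennreal (\<epsilon>/2)"
    unfolding eventually_at_top_linorder by blast
  have "eventually (\<lambda>R. eventually (\<lambda>n. outer_prob M (tail_event {a..b} R (\<epsilon>/2) n) < \<eta>)
      sequentially) at_top"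
    using A3b_space assms by (intro eventually_limsup_less) auto
  then obtain R0 where R0: "\<And>R. R0 \<le> R \<Longrightarrow>
      eventually (\<lambda>n. outer_prob M (tail_event {a..b} R (\<epsilon>/2) n) < \<eta>) sequentially"
    unfolding eventually_at_top_linorder by blast
  define R where "R = max R0 1"
  have "0 < R" unfolding R_def by simp
  have tail: "eventually (\<lambda>n. outer_prob M (tail_event {a..b} R (\<epsilon>/2) n) < \<eta>) sequentially"
    unfolding R_def by (rule R0) simp
  obtain r0 where "0 < r0" and outside: "eventually (\<lambda>n. \<forall>x\<in>F. r0 \<le> dist \<rho> x \<longrightarrow>
      g n x \<notin> gball (V n) (adj n) \<rho> (\<alpha> n * R)) sequentially"
    using eventually_g_outside_gball[OF \<open>0 < R\<close>] by blast
  define r where "r = max r0 r1"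
  have small: "q t x < \<epsilon>/2" if "t \<in> {a..b}" "x \<in> F - ball \<rho> r" for t x
  proof -
    have "ennreal (q t x) \<le> (SUP t\<in>{a..b}. ennreal (q t x))" using that(1) by (rule SUP_upper)
    also have "\<dots> \<le> (SUP x\<in>F - ball \<rho> r. SUP t\<in>{a..b}. ennreal (q t x))"
      using that(2) by (rule SUP_upper)
    finally show ?thesis
      by (rule ennreal_le_less_imp_less) (use r1[of r] assms(3) in \<open>auto simp: r_def\<close>)
  qed
  from outside tail have "eventually (\<lambda>n.
      outer_prob M (deviation_event (F - ball \<rho> r) {a..b} \<epsilon> n) < \<eta>) sequentially"
  proof eventually_elim
    case (elim n)
    have "g n x \<notin> gball (V n) (adj n) \<rho> (\<alpha> n * R)" if "x \<in> F - ball \<rho> r" for x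
    proof -
      from that have "x \<in> F" "r0 \<le> dist \<rho> x" unfolding r_def by auto
      with elim(1) show ?thesis by blast
    qed
    from outer_prob_mono[OF deviation_event_far_subset[where b=b and r=r and R=R and n=n,
          OF \<open>0 < a\<close> small this]] elim(2)
    show ?case by linarith
  qed
  moreover have "0 < r" using \<open>0 < r0\<close> unfolding r_def by simp
  ultimately show thesis using that by blast
qed

lemma near_deviation_control:
  assumes "0 < a" "a \<le> b" "0 < r" "0 < \<epsilon>" "0 < \<eta>"
  shows "eventually (\<lambda>n. outer_prob M (deviation_event (F \<inter> ball \<rho> r) {a..b} \<epsilon> n) < \<eta>) sequentially"
proof -
  have K: "compact (F \<inter> cball \<rho> (r+1))" "F \<inter> cball \<rho> (r+1) \<subseteq> F"
    using F_proper \<open>0 < r\<close> by auto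
  obtain d where "0 < d" and unif: "\<And>s t x y. s \<in> {a..b+1} \<Longrightarrow> t \<in> {a..b+1} \<Longrightarrow>
      x \<in> F \<inter> cball \<rho> (r+1) \<Longrightarrow> y \<in> F \<inter> cball \<rho> (r+1) \<Longrightarrow> \<bar>s - t\<bar> < d \<Longrightarrow> dist x y < d \<Longrightarrow>
      \<bar>q s x - q t y\<bar> < \<epsilon>/8"
    using uniformly_continuous_on_Icc_Times[OF q_cont K \<open>0 < a\<close>, of "\<epsilon>/8"] \<open>0 < \<epsilon>\<close> by auto
  obtain Qm where "0 \<le> Qm" and Qm: "\<And>t x. t \<in> {a..b+1} \<Longrightarrow> x \<in> F \<inter> cball \<rho> (r+1) \<Longrightarrow> q t x \<le> Qm"
    using bounded_above_on_Icc_Times[OF q_cont K \<open>0 < a\<close>] by blast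
  obtain C slack n0 where "0 \<le> C" and slack: "\<And>n. 0 \<le> slack n" "slack \<in> o(\<alpha>)"
    and gd: "\<And>n u v. n0 \<le> n \<Longrightarrow> u \<in> V n \<inter> ball \<rho> (r+1) \<Longrightarrow> v \<in> V n \<inter> ball \<rho> (r+1) \<Longrightarrow>
      real (gdist (adj n) u v) \<le> C * \<alpha> n * dist u v + slack n"
    using graph_metric_upper_bound[of "r+1"] \<open>0 < r\<close> by auto
  have "eventually (\<lambda>\<delta>'. eventually (\<lambda>n.
      outer_prob M (oscillation_event {a..b} (C * (r+1) + 1) \<delta>' (\<epsilon>/4) n) < \<eta>/4) sequentially) (at_right 0)"
    using A2[OF \<open>0 < a\<close> \<open>a \<le> b\<close>, of "C * (r+1) + 1" "\<epsilon>/4"] \<open>0 \<le> C\<close> \<open>0 < r\<close> \<open>0 < \<epsilon>\<close> \<open>0 < \<eta>\<close>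
    by (intro eventually_limsup_less) (auto simp: add_nonneg_pos)
  then obtain \<delta>' where "0 < \<delta>'" and osc: "eventually (\<lambda>n.
      outer_prob M (oscillation_event {a..b} (C * (r+1) + 1) \<delta>' (\<epsilon>/4) n) < \<eta>/4) sequentially"
    unfolding eventually_at_right_field by (metis field_lbound_gt_zero zero_less_one)
  define \<delta> where "\<delta> = min (d/4) (min 1 (\<delta>' / (6 * C + 1)))"
  have \<delta>: "0 < \<delta>" "\<delta> \<le> 1" "2 * \<delta> < d"
    using \<open>0 < d\<close> \<open>0 < \<delta>'\<close> \<open>0 \<le> C\<close> unfolding \<delta>_def by auto
  have "\<delta> \<le> \<delta>' / (6 * C + 1)" unfolding \<delta>_def by simp
  then have "(6 * C + 1) * \<delta> \<le> \<delta>'" using \<open>0 \<le> C\<close> by (simp add: le_divide_eq mult.commute)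
  then have "3 * C * \<delta> \<le> \<delta>'/2" using \<delta>(1) by (simp add: algebra_simps)
  obtain Y c where Y: "finite Y" "Y \<subseteq> F \<inter> cball \<rho> r" "F \<inter> cball \<rho> r \<subseteq> (\<Union>y\<in>Y. ball y \<delta>)"
    and c: "0 < c" "\<And>y. y \<in> Y \<Longrightarrow> c \<le> measure \<nu> (ball y \<delta>)"
    using finite_ball_net[OF \<open>0 < r\<close> \<delta>(1)] by blast
  define e1 where "e1 = min (c/2) (c * \<epsilon> / (32 * (Qm + 1)))"
  define e2 where "e2 = c * \<epsilon> / 32"
  have e: "0 < e1" "0 < e2" "e1 \<le> c/2" "e1 * (Qm + 1) \<le> c * \<epsilon> / 32" "e2 \<le> c * \<epsilon> / 32"
  proof -
    show "0 < e1" "0 < e2" "e2 \<le> c * \<epsilon> / 32"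
      using c(1) \<open>0 \<le> Qm\<close> \<open>0 < \<epsilon>\<close> unfolding e1_def e2_def by auto
    show "e1 \<le> c/2" unfolding e1_def by (rule min.cobounded1)
    have "e1 \<le> c * \<epsilon> / (32 * (Qm + 1))" unfolding e1_def by (rule min.cobounded2)
    then have "e1 * (32 * (Qm + 1)) \<le> c * \<epsilon>" using \<open>0 \<le> Qm\<close> by (simp add: le_divide_eq)
    then show "e1 * (Qm + 1) \<le> c * \<epsilon> / 32" by (simp add: le_divide_eq algebra_simps)
  qed
  have "(\<lambda>n. \<Sum>y\<in>Y. outer_prob M (mass_event y \<delta> e1 n) + outer_prob M (hitting_event {a..b+1} y \<delta> e2 n))
      \<longlonglongrightarrow> (\<Sum>y\<in>Y. 0 + 0)"
    using Y(2) \<delta>(1) e(1,2) \<open>0 < a\<close> \<open>a \<le> b\<close>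
    by (intro tendsto_sum tendsto_add A1c A1d) auto
  then have balls: "eventually (\<lambda>n. (\<Sum>y\<in>Y. outer_prob M (mass_event y \<delta> e1 n)
      + outer_prob M (hitting_event {a..b+1} y \<delta> e2 n)) < \<eta>/2) sequentially"
    using \<open>0 < \<eta>\<close> by (intro order_tendstoD(2)) auto
  have "eventually (\<lambda>n. (SUP x\<in>ball \<rho> r \<inter> F. ennreal (infdist x (V n))) < ennreal \<delta>) sequentially"
    using order_tendstoD(2)[OF A1b[OF \<open>0 < r\<close>]] \<delta>(1) by simp
  moreover have "eventually (\<lambda>n. n0 \<le> n) sequentially" by (rule eventually_ge_at_top)
  moreover note eventually_scales[OF slack(2,1) half_gt_zero[OF \<open>0 < \<delta>'\<close>] \<open>0 < d\<close>] osc balls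
  ultimately show ?thesis
  proof eventually_elim
    case (elim n)
    have dense: "infdist x (V n) < \<delta>" if "x \<in> ball \<rho> r \<inter> F" for x
      using elim(1) that \<delta>(1) by (rule SUP_ennreal_less_imp_less)
    from elim(3) have scales: "0 < \<beta> n" "1 \<le> \<gamma> n" "1 / \<gamma> n < d"
      and slack_n: "slack n \<le> \<alpha> n * (\<delta>'/2)" "slack n < \<alpha> n"
      by auto
    have "deviation_event (F \<inter> ball \<rho> r) {a..b} \<epsilon> n \<inter> space M
      \<subseteq> oscillation_event {a..b} (C * (r+1) + 1) \<delta>' (\<epsilon>/4) n
         \<union> (\<Union>y\<in>Y. mass_event y \<delta> e1 n \<union> hitting_event {a..b+1} y \<delta> e2 n)"
      by (rule near_deviation_subset[OF \<open>0 < a\<close> \<open>0 < \<epsilon>\<close> \<delta> \<open>0 \<le> C\<close> \<open>3 * C * \<delta> \<le> \<delta>'/2\<close>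
            unif Qm Y(2,3) c e(3-5) gd[OF elim(2)] slack_n scales dense])
    then have "outer_prob M (deviation_event (F \<inter> ball \<rho> r) {a..b} \<epsilon> n)
      \<le> outer_prob M (oscillation_event {a..b} (C * (r+1) + 1) \<delta>' (\<epsilon>/4) n)
        + (\<Sum>y\<in>Y. outer_prob M (mass_event y \<delta> e1 n) + outer_prob M (hitting_event {a..b+1} y \<delta> e2 n))"
      using Y(1) by (rule outer_prob_cover_le)
    also have "\<dots> < \<eta>"
      using elim(4,5) \<open>0 < \<eta>\<close> by linarith
    finally show ?case .
  qed
qed

lemma deviation_event_tendsto_zero:
  assumes "0 < T1" "0 < \<epsilon>"
  shows "(\<lambda>n. outer_prob M (deviation_event F {T1..} \<epsilon> n)) \<longlonglongrightarrow> 0"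
proof (rule order_tendstoI)
  fix \<eta> :: real assume "0 < \<eta>"
  then have "0 < \<eta>/3" by simp
  obtain T where "T1 \<le> T" and small: "\<And>t x. T \<le> t \<Longrightarrow> x \<in> F \<Longrightarrow> q t x < \<epsilon>/2"
    and large: "eventually (\<lambda>n. outer_prob M (sup_event T (\<epsilon>/2) n) < \<eta>/3) sequentially"
    using large_time_control[where S=T1, OF \<open>0 < \<epsilon>\<close> \<open>0 < \<eta>/3\<close>] by blast
  obtain r where "0 < r"
    and far: "eventually (\<lambda>n. outer_prob M (deviation_event (F - ball \<rho> r) {T1..T} \<epsilon> n) < \<eta>/3)
      sequentially"
    using far_deviation_control[OF \<open>0 < T1\<close> \<open>T1 \<le> T\<close> \<open>0 < \<epsilon>\<close> \<open>0 < \<eta>/3\<close>] by blast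
  have near: "eventually (\<lambda>n. outer_prob M (deviation_event (F \<inter> ball \<rho> r) {T1..T} \<epsilon> n) < \<eta>/3)
      sequentially"
    by (rule near_deviation_control[OF \<open>0 < T1\<close> \<open>T1 \<le> T\<close> \<open>0 < r\<close> \<open>0 < \<epsilon>\<close> \<open>0 < \<eta>/3\<close>])
  have "0 < T" using \<open>0 < T1\<close> \<open>T1 \<le> T\<close> by linarith
  from near far large show "eventually (\<lambda>n. outer_prob M (deviation_event F {T1..} \<epsilon> n) < \<eta>) sequentially"
  proof eventually_elim
    case (elim n)
    let ?near = "deviation_event (F \<inter> ball \<rho> r) {T1..T} \<epsilon> n"
      and ?far = "deviation_event (F - ball \<rho> r) {T1..T} \<epsilon> n"
      and ?late = "sup_event T (\<epsilon>/2) n"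
    have "deviation_event F {T1..} \<epsilon> n \<inter> space M \<subseteq> ?near \<union> ?far \<union> ?late"
      using deviation_event_split[of T1 \<epsilon> n r T]
        deviation_event_large_time_subset[OF \<open>0 < T\<close> small, of n] by blast
    then have "outer_prob M (deviation_event F {T1..} \<epsilon> n) \<le> outer_prob M (?near \<union> ?far \<union> ?late)"
      by (rule outer_prob_mono)
    also have "\<dots> \<le> outer_prob M ?near + outer_prob M ?far + outer_prob M ?late"
      using outer_prob_Un[of M "?near \<union> ?far" ?late] outer_prob_Un[of M ?near ?far] by linarith
    also have "\<dots> < \<eta>" using elim by linarith
    finally show ?case .
  qed
next
  fix \<eta> :: real assume "\<eta> < 0"
  then have "\<eta> < outer_prob M (deviation_event F {T1..} \<epsilon> n)" for n
    using outer_prob_nonneg by (rule order_less_le_trans)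
  then show "eventually (\<lambda>n. \<eta> < outer_prob M (deviation_event F {T1..} \<epsilon> n)) sequentially"
    by simp
qed

end

theorem theorem6p2:
  fixes F :: "'e::metric_space set" and \<rho> :: 'e and \<nu> :: "'e measure"
    and q :: "real \<Rightarrow> 'e \<Rightarrow> real"
    and V :: "nat \<Rightarrow> 'e set" and adj :: "nat \<Rightarrow> 'e \<Rightarrow> 'e \<Rightarrow> bool"
    and M :: "('e \<Rightarrow> 'e \<Rightarrow> real) measure"
    and \<alpha> \<beta> \<gamma> :: "nat \<Rightarrow> real" and g :: "nat \<Rightarrow> 'e \<Rightarrow> 'e"
    and T1 \<epsilon> :: real
  assumes F_proper: "\<forall>x r. r > 0 \<longrightarrow> compact (F \<inter> cball x r)"
    and rho_F: "\<rho> \<in> F"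
    and nu_sets: "sets \<nu> = sets borel"
    and nu_ext: "emeasure \<nu> (UNIV - F) = 0"
    and nu_lfin: "\<forall>K. compact K \<and> K \<subseteq> F \<longrightarrow> emeasure \<nu> K < \<infinity>"
    and nu_inner: "\<forall>A\<in>sets borel. emeasure \<nu> A = (SUP K\<in>{K. compact K \<and> K \<subseteq> A \<inter> F}. emeasure \<nu> K)"
    and nu_supp: "\<forall>x\<in>F. \<forall>r>0. emeasure \<nu> (ball x r) > 0"
    and q_cont: "continuous_on ({0<..} \<times> F) (\<lambda>(t, x). q t x)"
    and q_nonneg: "\<forall>t>0. \<forall>x\<in>F. q t x \<ge> 0"
    and q_int: "\<forall>t>0. (\<integral>\<^sup>+x\<in>F. ennreal (q t x) \<partial>\<nu>) = 1"
    and G_edges: "\<forall>n x y. adj n x y \<longrightarrow> x \<in> V n \<and> y \<in> V n"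
    and G_sym: "\<forall>n x y. adj n x y \<longrightarrow> adj n y x"
    and G_irrefl: "\<forall>n x. \<not> adj n x x"
    and G_locfin: "\<forall>n x. finite {y. adj n x y}"
    and G_conn: "\<forall>n. \<forall>x\<in>V n. \<forall>y\<in>V n. \<exists>k. (adj n ^^ k) x y"
    and G_two: "\<forall>n. \<exists>x\<in>V n. \<exists>y\<in>V n. x \<noteq> y"
    and G_root: "\<forall>n. \<rho> \<in> V n"
    and M_prob: "prob_space M"
    and M_wts: "\<forall>w\<in>space M. \<forall>n x y. adj n x y \<longrightarrow> 0 < w x y \<and> w x y = w y x"
    and \<alpha>_nonneg: "\<forall>n. \<alpha> n \<ge> 0" and \<beta>_nonneg: "\<forall>n. \<beta> n \<ge> 0" and \<gamma>_nonneg: "\<forall>n. \<gamma> n \<ge> 0"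
    and \<alpha>_lim: "filterlim \<alpha> at_top sequentially"
    and \<beta>_lim: "filterlim \<beta> at_top sequentially"
    and \<gamma>_lim: "filterlim \<gamma> at_top sequentially"
    and g_def: "\<forall>n x. g n x \<in> V n \<and> (\<forall>v\<in>V n. dist x (g n x) \<le> dist x v)"
    \<comment> \<open>(A1R)(a)\<close>
    and A1a1: "\<exists>c1>0. \<forall>n. \<forall>x\<in>V n. \<forall>y\<in>V n. real (gdist (adj n) x y) \<ge> c1 * \<alpha> n * dist x y"
    and A1a2: "\<exists>\<alpha>t :: nat \<Rightarrow> real. (\<forall>n. \<alpha>t n \<ge> 0) \<and> \<alpha>t \<in> o(\<alpha>) \<and>
       (\<forall>r>0. \<exists>c2. \<exists>n0. \<forall>n\<ge>n0. \<forall>x\<in>V n \<inter> ball \<rho> r. \<forall>y\<in>V n \<inter> ball \<rho> r.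
          real (gdist (adj n) x y) \<le> c2 * \<alpha> n * dist x y + \<alpha>t n)"
    \<comment> \<open>(A1R)(b)\<close>
    and A1b: "\<forall>r>0. (\<lambda>n. SUP x\<in>ball \<rho> r \<inter> F. ennreal (infdist x (V n))) \<longlonglongrightarrow> 0"
    \<comment> \<open>(A1R)(c)\<close>
    and A1c: "\<forall>x\<in>F. \<forall>r>0. \<forall>e>0. (\<lambda>n. outer_prob M
        {w. \<bar>gmeas w (adj n) (V n) (ball x r) / \<beta> n - measure \<nu> (ball x r)\<bar> > e}) \<longlonglongrightarrow> 0"
    \<comment> \<open>(A1R)(d)\<close>
    and A1d: "\<forall>a b. 0 < a \<and> a \<le> b \<longrightarrow> (\<forall>x\<in>F. \<forall>r>0. \<forall>e>0. (\<lambda>n. outer_prob M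
        {w. \<exists>t\<in>{a..b}. \<bar>hitp w (adj n) (nat \<lfloor>\<gamma> n * t\<rfloor>) \<rho> (ball x r)
             - enn2real (\<integral>\<^sup>+y\<in>ball x r \<inter> F. ennreal (q t y) \<partial>\<nu>)\<bar> > e}) \<longlonglongrightarrow> 0)"
    \<comment> \<open>(A2R)\<close>
    and A2: "\<forall>a b. 0 < a \<and> a \<le> b \<longrightarrow> (\<forall>r>0. \<forall>e>0.
        ((\<lambda>\<delta>. limsup (\<lambda>n. ereal (outer_prob M
          {w. \<exists>x\<in>gball (V n) (adj n) \<rho> (\<alpha> n * r). \<exists>y\<in>gball (V n) (adj n) \<rho> (\<alpha> n * r).
                real (gdist (adj n) x y) \<le> \<alpha> n * \<delta> \<and>
                (\<exists>t\<in>{a..b}. \<beta> n * \<bar>qk w (adj n) (nat \<lfloor>\<gamma> n * t\<rfloor>) \<rho> x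
                                   - qk w (adj n) (nat \<lfloor>\<gamma> n * t\<rfloor>) \<rho> y\<bar> > e)})))
         \<longlongrightarrow> 0) (at_right 0))"
    \<comment> \<open>(A3R)\<close>
    and A3_mid: "midpoint_property F"
    and A3a1: "((\<lambda>t. SUP x\<in>F. ennreal (q t x)) \<longlongrightarrow> 0) at_top"
    and A3a2: "\<forall>a b. 0 < a \<and> a \<le> b \<longrightarrow>
        ((\<lambda>r. SUP x\<in>F - ball \<rho> r. SUP t\<in>{a..b}. ennreal (q t x)) \<longlongrightarrow> 0) at_top"
    and A3b1: "\<forall>e>0. ((\<lambda>t. limsup (\<lambda>n. ereal (outer_prob M
        {w. \<exists>x\<in>V n. \<beta> n * qk w (adj n) (nat \<lfloor>\<gamma> n * t\<rfloor>) \<rho> x > e}))) \<longlongrightarrow> 0) at_top"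
    and A3b2: "\<forall>a b. 0 < a \<and> a \<le> b \<longrightarrow> (\<forall>e>0. ((\<lambda>r. limsup (\<lambda>n. ereal (outer_prob M
        {w. \<exists>x\<in>V n - gball (V n) (adj n) \<rho> (\<alpha> n * r). \<exists>t\<in>{a..b}.
              \<beta> n * qk w (adj n) (nat \<lfloor>\<gamma> n * t\<rfloor>) \<rho> x > e}))) \<longlongrightarrow> 0) at_top)"
    and T1_pos: "T1 > 0"
    and eps_pos: "\<epsilon> > 0"
  shows "(\<lambda>n. outer_prob M
     {w. \<exists>x\<in>F. \<exists>t\<ge>T1. \<bar>\<beta> n * qk w (adj n) (nat \<lfloor>\<gamma> n * t\<rfloor>) \<rho> (g n x) - q t x\<bar> > \<epsilon>})
     \<longlonglongrightarrow> 0"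
proof -
  interpret graph_approximation F \<rho> \<nu> q V adj M \<alpha> \<beta> \<gamma> g
    using F_proper rho_F nu_sets nu_ext nu_lfin nu_supp q_cont q_nonneg G_edges G_sym G_locfin
      G_conn G_two G_root M_wts \<alpha>_nonneg \<beta>_nonneg \<gamma>_nonneg \<alpha>_lim \<beta>_lim \<gamma>_lim g_def
    by (unfold_locales; meson)
  have scale_abs: "\<beta> n * \<bar>a - b\<bar> = \<bar>\<beta> n * a - \<beta> n * b\<bar>" for n a b
    using \<beta>_nonneg by (simp add: abs_mult right_diff_distrib[symmetric])
  interpret heat_kernel_approximation F \<rho> \<nu> q V adj M \<alpha> \<beta> \<gamma> g
    using A1a1 A1a2 A1b A1c A1d A2 A3_mid A3a1 A3a2 A3b1 A3b2 unfolding scale_abs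
    by (unfold_locales; (unfold mass_event_def hitting_event_def oscillation_event_def
        sup_event_def tail_event_def scaled_qk_def)?; meson)
  have "(\<lambda>n. outer_prob M (deviation_event F {T1..} \<epsilon> n)) \<longlonglongrightarrow> 0"
    using T1_pos eps_pos by (rule deviation_event_tendsto_zero)
  then show ?thesis by (simp only: deviation_event_def scaled_qk_def Bex_def atLeast_iff)
qed

end
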